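(* For all nonnegative integers $s,t$ there exists a positive real $\alpha_{s,t}$ such that for every $n$ and every good quadruple $(\mathbf{x},\mathbf{k},\mathbf{y},\boldsymbol\ell)$ with $\mathbf{x}$ of length $s$ and $\mathbf{y}$ of length $t$, $$\Pr[A(\mathbf{x},\mathbf{k},\mathbf{y},\boldsymbol\ell)]\ge\alpha_{s,t}\prod_{i=1}^{s}k_i^{-3/2}\prod_{j=1}^{t}\ell_j^{-3/2}.$$
   Context: The random Catalan-pair graph $CP_n$: points $1,\dots,2n$ on a line; each of $1,\dots,2n-1$ is colored red/blue independently and uniformly, and $2n$ is colored so that the number of red points is even; a uniformly random non-crossing perfect matching (no $a<b<c<d$ with $\{a,c\},\{b,d\}$ both arcs) is placed independently on the red points and on the blue points. Points $a<b$ match if they have the same color and are joined by an arc. Let $\mathbf{x}=(x_1<\dots<x_s)$, $\mathbf{k}=(k_1,\dots,k_s)$, $\mathbf{y}=(y_1<\dots<y_t)$, $\boldsymbol\ell=(\ell_1,\dots,\ell_t)$ be tuples of positive integers. The quadruple is good if (1) $1\le x_i<x_i+k_i\le 2n$ and $1\le y_j<y_j+\ell_j\le 2n$ for all $i,j$; (2) any two of the numbers $x_i,x_i+k_i,y_j,y_j+\ell_j$ differ by at least $2$; (3) there are no $i\ne j$ with $x_i<x_j<x_i+k_i<x_j+k_j$ and no $i\ne j$ with $y_i<y_j<y_i+\ell_i<y_j+\ell_j$. $A(\mathbf{x},\mathbf{k},\mathbf{y},\boldsymbol\ell)$ is the event that all $x_i,x_i+k_i$ are red and all $y_j,y_j+\ell_j$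 are blue; for each $i$ the number of red points strictly between $x_i$ and $x_i+k_i$ is even and for each $j$ the number of blue points strictly between $y_j$ and $y_j+\ell_j$ is even; and $x_i$ matches $x_i+k_i$ and $y_j$ matches $y_j+\ell_j$ for all $i,j$. *)

theory Defs
  imports "HOL-Probability.Probability"
begin

definition nc_matchings :: "nat set \<Rightarrow> (nat \<times> nat) set set" where
  "nc_matchings S = {M. (\<forall>(a,b)\<in>M. a < b \<and> a \<in> S \<and> b \<in> S)
      \<and> (\<forall>z\<in>S. \<exists>!p. p \<in> M \<and> (z = fst p \<or> z = snd p))
      \<and> \<not> (\<exists>a c b d. (a,c) \<in> M \<and> (b,d) \<in> M \<and> a < b \<and> b < c \<and> c < d)}"

text \<open>Admissible red sets: subsets of {1..2n} of even size (colours of 1..2n-1 free,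
  colour of 2n fixed by parity; this gives the uniform distribution on these sets).\<close>
definition red_sets :: "nat \<Rightarrow> nat set set" where
  "red_sets n = {R. R \<subseteq> {1..2*n} \<and> even (card R)}"

definition CP :: "nat \<Rightarrow> (nat set \<times> (nat \<times> nat) set \<times> (nat \<times> nat) set) pmf" where
  "CP n = do {
      R \<leftarrow> pmf_of_set (red_sets n);
      M1 \<leftarrow> pmf_of_set (nc_matchings R);
      M2 \<leftarrow> pmf_of_set (nc_matchings ({1..2*n} - R));
      return_pmf (R, M1, M2) }"

definition good :: "nat \<Rightarrow> nat list \<Rightarrow> nat list \<Rightarrow> nat list \<Rightarrow> nat list \<Rightarrow> bool" where
  "good n xs ks ys ls \<longleftrightarrow>
     length ks = length xs \<and> length ls = length ys \<and>
     sorted_wrt (<) xs \<and> sorted_wrt (<) ys \<and>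
     (\<forall>v\<in>set xs \<union> set ks \<union> set ys \<union> set ls. v \<ge> 1) \<and>
     (\<forall>i<length xs. 1 \<le> xs!i \<and> xs!i < xs!i + ks!i \<and> xs!i + ks!i \<le> 2*n) \<and>
     (\<forall>j<length ys. 1 \<le> ys!j \<and> ys!j < ys!j + ls!j \<and> ys!j + ls!j \<le> 2*n) \<and>
     (let E = xs @ map2 (+) xs ks @ ys @ map2 (+) ys ls in
        \<forall>i<length E. \<forall>j<length E. i \<noteq> j \<longrightarrow> E!i + 2 \<le> E!j \<or> E!j + 2 \<le> E!i) \<and>
     \<not> (\<exists>i<length xs. \<exists>j<length xs. i \<noteq> j \<and>
          xs!i < xs!j \<and> xs!j < xs!i + ks!i \<and> xs!i + ks!i < xs!j + ks!j) \<and>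
     \<not> (\<exists>i<length ys. \<exists>j<length ys. i \<noteq> j \<and>
          ys!i < ys!j \<and> ys!j < ys!i + ls!i \<and> ys!i + ls!i < ys!j + ls!j)"

definition event_A :: "nat \<Rightarrow> nat list \<Rightarrow> nat list \<Rightarrow> nat list \<Rightarrow> nat list
    \<Rightarrow> (nat set \<times> (nat \<times> nat) set \<times> (nat \<times> nat) set) set" where
  "event_A n xs ks ys ls = {(R, M1, M2).
     (\<forall>i<length xs. xs!i \<in> R \<and> xs!i + ks!i \<in> R
        \<and> even (card {z \<in> R. xs!i < z \<and> z < xs!i + ks!i})
        \<and> (xs!i, xs!i + ks!i) \<in> M1) \<and>
     (\<forall>j<length ys. ys!j \<in> {1..2*n} - R \<and> ys!j + ls!j \<in> {1..2*n} - R
        \<and> even (card {z \<in> {1..2*n} - R. ys!j < z \<and> z < ys!j + ls!j})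
        \<and> (ys!j, ys!j + ls!j) \<in> M2)}"

end

theory Submission
  imports Defs
begin

text \<open>Call \<open>R\<close> admissible if all prescribed endpoints get their
  colour and every prescribed arc encloses an even number of points of its colour. These are
  parity conditions on \<open>R\<close> (on intervals and on single points, plus the parity of \<open>|R|\<close>), and each
  of them has a pivot point that no earlier condition involves, so they are independent and at
  least a \<open>2\<^sup>-\<^sup>3\<^sup>(\<^sup>s\<^sup>+\<^sup>t\<^sup>)\<^sup>-\<^sup>1\<close> fraction of all red sets is admissible.

  Given an admissible \<open>R\<close>, each matching is uniform among the non-crossing perfect matchings of
  its colour class, counted by Catalan numbers, and has to contain a compatible family of arcs.
  Splitting at a longest arc reduces this to one arc at a time, and an arc of length \<open>k\<close> enclosing
  \<open>2j\<close> of the \<open>2m\<close> points is present with probability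
  \<open>C\<^sub>j C\<^sub>m\<^sub>-\<^sub>1\<^sub>-\<^sub>j / C\<^sub>m \<ge> C\<^sub>j / 4\<^sup>j\<^sup>+\<^sup>1 \<ge> 1 / (8 (j+1)\<^sup>3\<^sup>/\<^sup>2) \<ge> k\<^sup>-\<^sup>3\<^sup>/\<^sup>2 / 8\<close>.\<close>

section \<open>Catalan numbers\<close>

text \<open>\<open>C\<^sub>m = (-1)\<^sup>m 2 \<cdot> 4\<^sup>m (1/2 choose m+1)\<close>, the coefficients of the generating function
  \<open>(1 - sqrt (1 - 4x)) / (2x)\<close>.\<close>
definition catalan :: "nat \<Rightarrow> real" where
  "catalan m = (-1)^m * (2 * 4^m) * ((1/2) gchoose Suc m)"

lemma half_gchoose_Suc: "((1/2::real) gchoose Suc k) = ((1/2) gchoose k) * (1/2 - real k) / (real k + 1)"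
  using gbinomial_mult_1[of "1/2::real" k] by (simp add: field_simps)

lemma half_gchoose_Suc_catalan: "((1/2::real) gchoose Suc i) = (-1)^i * catalan i / (2 * 4^i)"
proof -
  have "(-1::real)^i * (-1)^i = 1" by (simp add: power_mult_distrib[symmetric])
  then show ?thesis by (simp add: catalan_def field_simps)
qed

lemma catalan_0 [simp]: "catalan 0 = 1" by (simp add: catalan_def)

lemma catalan_Suc: "catalan (Suc m) = catalan m * (4 * real m + 2) / (real m + 2)"
  unfolding catalan_def half_gchoose_Suc[of "Suc m"] by (simp add: field_simps)

lemma catalan_pos: "catalan m > 0"
  by (induction m) (simp_all add: catalan_Suc)

text \<open>Vandermonde's identity for \<open>1/2 + 1/2 = 1\<close>: the coefficients of \<open>(1 + x)\<^sup>1\<^sup>/\<^sup>2\<close> convolve to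
  those of \<open>1 + x\<close>, which vanish from degree 2 on.\<close>
lemma catalan_convolution: "catalan (Suc m) = (\<Sum>i\<le>m. catalan i * catalan (m - i))"
proof -
  let ?g = "\<lambda>k. (1/2::real) gchoose k"
  let ?f = "\<lambda>k. ?g k * ?g (m + 2 - k)"
  have "(\<Sum>k\<le>m + 2. ?f k) = (1::real) gchoose (m + 2)"
    using gbinomial_Vandermonde[of "1/2::real" "1/2" "m+2"] by (simp add: atLeast0AtMost)
  also have "\<dots> = 0"
    using binomial_gbinomial[of 1 "m+2", where 'a=real] by simp
  finally have V: "(\<Sum>k\<le>m + 2. ?f k) = 0" .
  have "(\<Sum>k\<le>m + 2. ?f k) = ?f 0 + (\<Sum>k\<le>Suc m. ?f (Suc k))"
    by (simp only: add_2_eq_Suc' sum.atMost_Suc_shift)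
  then have "(\<Sum>k\<le>m + 2. ?f k) = ?f 0 + (\<Sum>k\<le>m. ?f (Suc k)) + ?f (m + 2)"
    by simp
  moreover have "?f 0 = (-1)^Suc m * catalan (Suc m) / (8 * 4^m)"
    "?f (m + 2) = (-1)^Suc m * catalan (Suc m) / (8 * 4^m)"
    using half_gchoose_Suc_catalan[of "Suc m"] by (simp_all add: numeral_2_eq_2)
  moreover have "?f (Suc k) = (-1)^m * (catalan k * catalan (m - k)) / (4 * 4^m)" if "k \<le> m" for k
  proof -
    have "(-1::real)^k * (-1)^(m-k) = (-1)^m" "(2 * 4^k) * (2 * 4^(m-k)) = (4 * (4::real)^m)"
      using that by (simp_all add: power_add[symmetric])
    moreover have "m + 2 - Suc k = Suc (m - k)" using that by simp
    ultimately show ?thesis by (simp add: half_gchoose_Suc_catalan)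
  qed
  ultimately have "0 = (-1)^Suc m * catalan (Suc m) / (4 * 4^m)
      + (-1)^m * (\<Sum>k\<le>m. catalan k * catalan (m - k)) / (4 * 4^m)"
    using V by (simp add: sum_divide_distrib[symmetric] sum_distrib_left[symmetric])
  then show ?thesis by (simp add: field_simps)
qed

lemma catalan_add_le: "catalan (a + d) \<le> 4^d * catalan a"
proof (induction d)
  case (Suc d)
  have "(4 * real (a + d) + 2) / (real (a + d) + 2) \<le> 4" by (simp add: field_simps)
  then have "catalan (a + Suc d) \<le> 4 * catalan (a + d)"
    using catalan_pos[of "a + d"] by (simp add: catalan_Suc mult_left_le divide_le_eq)
  also have "\<dots> \<le> 4 * (4^d * catalan a)" using Suc by simp
  finally show ?case by simp
qed simp

lemma catalan_square_lower: "j \<ge> 1 \<Longrightarrow> (catalan j * (real j + 1))^2 \<ge> 16^j / (4 * real j)"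
proof (induction j rule: dec_induct)
  case (step j)
  have "catalan (Suc j) * (real (Suc j) + 1) = catalan j * (real j + 1) * ((4 * real j + 2) / (real j + 1))"
    by (simp add: catalan_Suc field_simps)
  then have "(catalan (Suc j) * (real (Suc j) + 1))^2
        = (catalan j * (real j + 1))^2 * ((4 * real j + 2) / (real j + 1))^2"
    by (simp only: power_mult_distrib)
  also have "\<dots> \<ge> 16^j / (4 * real j) * ((4 * real j + 2) / (real j + 1))^2"
    using step.IH by (intro mult_right_mono) auto
  also have "16^j / (4 * real j) * ((4 * real j + 2) / (real j + 1))^2 \<ge> 16^Suc j / (4 * real (Suc j))"
  proof -
    have j: "real j \<ge> 1" using step.hyps by simp
    have "16 / (4 * (real j + 1)) = 16 * real j * (real j + 1) / (4 * real j * (real j + 1)^2)"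
      using j by (simp add: divide_simps power2_eq_square) (simp add: algebra_simps)
    also have "\<dots> \<le> (4 * real j + 2)^2 / (4 * real j * (real j + 1)^2)"
      using j by (intro divide_right_mono) (auto simp: power2_eq_square algebra_simps)
    also have "\<dots> = ((4 * real j + 2) / (real j + 1))^2 / (4 * real j)"
      by (simp add: power_divide)
    finally have "16^j * (16 / (4 * (real j + 1))) \<le> 16^j * (((4 * real j + 2) / (real j + 1))^2 / (4 * real j))"
      by (intro mult_left_mono) auto
    then show ?thesis by (simp add: field_simps)
  qed
  finally show ?case .
qed (simp add: catalan_Suc)

lemma catalan_lower_bound: "catalan j / 4^Suc j \<ge> 1 / (8 * (real j + 1) powr (3/2))"
proof (cases "j = 0")
  case False
  have p: "(real j + 1) powr (3/2) = (real j + 1) * sqrt (real j + 1)"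
  proof -
    have "(real j + 1) powr (3/2) = (real j + 1) powr (1 + 1/2)" by simp
    also have "\<dots> = (real j + 1) * (real j + 1) powr (1/2)"
      by (subst powr_add) simp
    finally show ?thesis by (simp add: powr_half_sqrt)
  qed
  let ?y = "2 * (real j + 1) * sqrt (real j + 1) * catalan j"
  have "?y^2 = 2^2 * (real j + 1)^2 * (sqrt (real j + 1))^2 * (catalan j)^2"
    by (simp only: power_mult_distrib)
  also have "\<dots> = 4 * (real j + 1) * (catalan j * (real j + 1))^2"
    by (simp add: power_mult_distrib power2_eq_square)
  also have "\<dots> \<ge> 4 * (real j + 1) * (16^j / (4 * real j))"
    using catalan_square_lower[of j] False by (intro mult_left_mono) auto
  also have "4 * (real j + 1) * (16^j / (4 * real j)) \<ge> 16^j"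
    using False by (simp add: field_simps)
  also have "(16::real)^j = (4^j)^2"
    by (simp add: power2_eq_square power_mult_distrib[symmetric])
  finally have "(4^j)^2 \<le> ?y^2" .
  moreover have "?y \<ge> 0" using catalan_pos[of j] by simp
  ultimately have "?y \<ge> 4^j" by (rule power2_le_imp_le)
  then have "4 * 4^j \<le> catalan j * (8 * ((real j + 1) * sqrt (real j + 1)))"
    by (simp add: algebra_simps)
  moreover have "(real j + 1) * sqrt (real j + 1) > 0" by simp
  ultimately show ?thesis unfolding p by (simp add: divide_simps)
qed simp

section \<open>Non-crossing perfect matchings\<close>

lemma nc_matchingD:
  assumes "M \<in> nc_matchings S"
  shows nc_matching_arc: "(x, y) \<in> M \<Longrightarrow> x < y \<and> x \<in> S \<and> y \<in> S"
    and nc_matching_covers: "z \<in> S \<Longrightarrow> \<exists>p\<in>M. z = fst p \<or> z = snd p"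
    and nc_matching_no_crossing: "(a, c) \<in> M \<Longrightarrow> (b, d) \<in> M \<Longrightarrow> a < b \<Longrightarrow> b < c \<Longrightarrow> c < d \<Longrightarrow> False"
  using assms unfolding nc_matchings_def by blast+

lemma nc_matching_unique:
  assumes M: "M \<in> nc_matchings S" and "p \<in> M" "q \<in> M"
    and "z = fst p \<or> z = snd p" "z = fst q \<or> z = snd q"
  shows "p = q"
proof -
  have "z \<in> S" using nc_matching_arc[OF M, of "fst p" "snd p"] assms(2,4) by auto
  then show ?thesis using M assms(2-) unfolding nc_matchings_def by blast
qed

lemma nc_matchingsI:
  assumes "\<And>x y. (x, y) \<in> M \<Longrightarrow> x < y \<and> x \<in> S \<and> y \<in> S"
    and "\<And>z. z \<in> S \<Longrightarrow> \<exists>p\<in>M. z = fst p \<or> z = snd p"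
    and "\<And>p q z. p \<in> M \<Longrightarrow> q \<in> M \<Longrightarrow> z = fst p \<or> z = snd p \<Longrightarrow> z = fst q \<or> z = snd q \<Longrightarrow> p = q"
    and "\<And>a b c d. (a, c) \<in> M \<Longrightarrow> (b, d) \<in> M \<Longrightarrow> a < b \<Longrightarrow> b < c \<Longrightarrow> c < d \<Longrightarrow> False"
  shows "M \<in> nc_matchings S"
proof -
  have "\<exists>!p. p \<in> M \<and> (z = fst p \<or> z = snd p)" if "z \<in> S" for z
    using assms(2)[OF that] assms(3) by blast
  then show ?thesis unfolding nc_matchings_def using assms(1,4) by fast
qed

lemma finite_nc_matchings: "finite S \<Longrightarrow> finite (nc_matchings S)"
  by (rule finite_subset[of _ "Pow (S \<times> S)"]) (use nc_matching_arc in fastforce)+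

lemma nc_matchings_empty: "nc_matchings {} = {{}}"
  by (force simp: nc_matchings_def)

definition between :: "nat \<Rightarrow> nat \<Rightarrow> nat set \<Rightarrow> nat set" where
  "between a b S = {z\<in>S. a < z \<and> z < b}"

definition outside :: "nat \<Rightarrow> nat \<Rightarrow> nat set \<Rightarrow> nat set" where
  "outside a b S = {z\<in>S. z < a \<or> b < z}"

definition matchings_containing :: "nat set \<Rightarrow> (nat \<times> nat) set \<Rightarrow> (nat \<times> nat) set set" where
  "matchings_containing S A = {M \<in> nc_matchings S. A \<subseteq> M}"

lemma matchings_containing_empty [simp]: "matchings_containing S {} = nc_matchings S"
  by (simp add: matchings_containing_def)

lemma card_between_outside:
  assumes "finite S" "a < b" "a \<in> S" "b \<in> S"
  shows "card S = card (between a b S) + card (outside a b S) + 2"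
proof -
  let ?B = "between a b S" and ?O = "outside a b S"
  have S: "S = {a, b} \<union> (?B \<union> ?O)"
    using assms unfolding between_def outside_def by force
  have fin: "finite ?B" "finite ?O"
    using assms by (auto simp: between_def outside_def)
  have disj: "{a, b} \<inter> (?B \<union> ?O) = {}" "?B \<inter> ?O = {}"
    using assms unfolding between_def outside_def by auto
  have "card ({a, b} \<union> (?B \<union> ?O)) = card {a, b} + (card ?B + card ?O)"
    using fin disj by (simp only: card_Un_disjoint finite_Un finite.emptyI finite.insertI)
  then show ?thesis using S assms(2) by simp
qed

lemma card_between_le: "card (between a b S) \<le> b - a - 1"
proof -
  have "card (between a b S) \<le> card {a<..<b}"
    by (rule card_mono) (auto simp: between_def)
  then show ?thesis by simp
qed

lemma nc_matching_join:
  assumes ab: "a < b" "a \<in> S" "b \<in> S"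
    and M1: "M1 \<in> nc_matchings (between a b S)" and M2: "M2 \<in> nc_matchings (outside a b S)"
  shows "insert (a, b) (M1 \<union> M2) \<in> nc_matchings S"
proof (rule nc_matchingsI)
  have in1: "x < y \<and> a < x \<and> y < b \<and> x \<in> S \<and> y \<in> S" if "(x, y) \<in> M1" for x y
    using nc_matching_arc[OF M1 that] unfolding between_def by auto
  have in2: "x < y \<and> (x < a \<or> b < x) \<and> (y < a \<or> b < y) \<and> x \<in> S \<and> y \<in> S"
    if "(x, y) \<in> M2" for x y
    using nc_matching_arc[OF M2 that] unfolding outside_def by auto
  show "x < y \<and> x \<in> S \<and> y \<in> S" if "(x, y) \<in> insert (a, b) (M1 \<union> M2)" for x y
    using that ab in1 in2 by auto
  show "\<exists>p\<in>insert (a, b) (M1 \<union> M2). z = fst p \<or> z = snd p" if z: "z \<in> S" for z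
  proof -
    consider "z = a \<or> z = b" | "z \<in> between a b S" | "z \<in> outside a b S"
      using z unfolding between_def outside_def by fastforce
    then show ?thesis
      using nc_matching_covers[OF M1, of z] nc_matching_covers[OF M2, of z] by cases auto
  qed
  have zone1: "a < z \<and> z < b" if "r \<in> M1" "z = fst r \<or> z = snd r" for r z
    using that in1[of "fst r" "snd r"] by auto
  have zone2: "z < a \<or> b < z" if "r \<in> M2" "z = fst r \<or> z = snd r" for r z
    using that in2[of "fst r" "snd r"] by auto
  show "p = q" if p: "p \<in> insert (a, b) (M1 \<union> M2)" and q: "q \<in> insert (a, b) (M1 \<union> M2)"
    and z: "z = fst p \<or> z = snd p" "z = fst q \<or> z = snd q" for p q z
  proof -
    consider "p = (a, b)" | "p \<in> M1" | "p \<in> M2" using p by blast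
    then show ?thesis
    proof cases
      case 1
      then have "z = a \<or> z = b" using z(1) by auto
      then have "q \<notin> M1 \<and> q \<notin> M2" using zone1[of q z] zone2[of q z] z(2) ab(1) by auto
      then show ?thesis using 1 q by simp
    next
      case 2
      then have "a < z \<and> z < b" using zone1 z(1) by blast
      then have "q \<in> M1" using q zone2[of q z] z(2) by auto
      then show ?thesis using nc_matching_unique[OF M1 2 _ z] by blast
    next
      case 3
      then have "z < a \<or> b < z" using zone2 z(1) by blast
      then have "q \<in> M2" using q zone1[of q z] z(2) ab(1) by auto
      then show ?thesis using nc_matching_unique[OF M2 3 _ z] by blast
    qed
  qed
  show False if xu: "(x, u) \<in> insert (a, b) (M1 \<union> M2)" and yv: "(y, v) \<in> insert (a, b) (M1 \<union> M2)"
    and lt: "x < y" "y < u" "u < v" for x u y v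
  proof -
    consider "(y, v) \<in> M1" | "(y, v) \<in> M2" | "(y, v) = (a, b)" using yv by blast
    then show False
    proof cases
      case 1
      then have "(x, u) \<in> M1" using xu lt in1[of y v] in2[of x u] by auto
      then show False using nc_matching_no_crossing[OF M1 _ 1 lt] by blast
    next
      case 2
      then have "(x, u) \<in> M2" using xu lt in1[of x u] in2[of y v] by auto
      then show False using nc_matching_no_crossing[OF M2 _ 2 lt] by blast
    next
      case 3
      then show False using xu lt in1[of x u] in2[of x u] by auto
    qed
  qed
qed

lemma nc_matching_split:
  assumes ab: "a < b" and M: "M \<in> nc_matchings S" and abM: "(a, b) \<in> M"
  defines "M1 \<equiv> {p\<in>M. a < fst p \<and> fst p < b}" and "M2 \<equiv> {p\<in>M. fst p < a \<or> b < fst p}"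
  shows "M1 \<in> nc_matchings (between a b S)" and "M2 \<in> nc_matchings (outside a b S)"
    and "M = insert (a, b) (M1 \<union> M2)"
proof -
  have other: "fst p \<noteq> a \<and> fst p \<noteq> b \<and> snd p \<noteq> a \<and> snd p \<noteq> b" if "p \<in> M" "p \<noteq> (a, b)" for p
    using nc_matching_unique[OF M that(1) abM] that(2) by (metis fst_conv prod.collapse snd_conv)
  have in1: "a < d \<and> d < b" if "(c, d) \<in> M" "a < c" "c < b" for c d
    using nc_matching_arc[OF M that(1)] nc_matching_no_crossing[OF M abM that(1)] other[OF that(1)] that
    by fastforce
  have in2: "d < a \<or> b < d" if "(c, d) \<in> M" "c < a \<or> b < c" for c d
    using nc_matching_arc[OF M that(1)] nc_matching_no_crossing[OF M that(1) abM] other[OF that(1)] that ab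
    by fastforce
  show "M = insert (a, b) (M1 \<union> M2)"
    using abM other unfolding M1_def M2_def by fastforce
  show "M1 \<in> nc_matchings (between a b S)"
  proof (rule nc_matchingsI)
    show "x < y \<and> x \<in> between a b S \<and> y \<in> between a b S" if "(x, y) \<in> M1" for x y
      using that in1 nc_matching_arc[OF M] unfolding M1_def between_def by fastforce
    show "\<exists>p\<in>M1. z = fst p \<or> z = snd p" if z: "z \<in> between a b S" for z
    proof -
      obtain p where p: "p \<in> M" "z = fst p \<or> z = snd p"
        using nc_matching_covers[OF M] z unfolding between_def by blast
      have "a < fst p \<and> fst p < b"
      proof (cases "z = fst p")
        case False
        then have "fst p < z" "z = snd p" using nc_matching_arc[OF M, of "fst p" "snd p"] p by auto
        moreover have "p \<noteq> (a, b)" using z \<open>z = snd p\<close> unfolding between_def by auto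
        ultimately show ?thesis
          using other[OF p(1)] nc_matching_no_crossing[OF M, of "fst p" "snd p" a b] p(1) abM z
          unfolding between_def by fastforce
      qed (use z in \<open>auto simp: between_def\<close>)
      then show ?thesis using p unfolding M1_def by blast
    qed
  qed (use nc_matching_unique[OF M] nc_matching_no_crossing[OF M] in \<open>auto simp: M1_def\<close>)
  show "M2 \<in> nc_matchings (outside a b S)"
  proof (rule nc_matchingsI)
    show "x < y \<and> x \<in> outside a b S \<and> y \<in> outside a b S" if "(x, y) \<in> M2" for x y
      using that in2 nc_matching_arc[OF M] unfolding M2_def outside_def by fastforce
    show "\<exists>p\<in>M2. z = fst p \<or> z = snd p" if z: "z \<in> outside a b S" for z
    proof -
      obtain p where p: "p \<in> M" "z = fst p \<or> z = snd p"
        using nc_matching_covers[OF M] z unfolding outside_def by blast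
      have "p \<noteq> (a, b)" using p z ab unfolding outside_def by auto
      then have "fst p < a \<or> b < fst p"
        using other[OF p(1)] in1[of "fst p" "snd p"] p z unfolding outside_def by fastforce
      then show ?thesis using p unfolding M2_def by blast
    qed
  qed (use nc_matching_unique[OF M] nc_matching_no_crossing[OF M] in \<open>auto simp: M2_def\<close>)
qed

lemma card_matchings_containing_split:
  assumes ab: "a < b" "a \<in> S" "b \<in> S"
    and Ain: "\<forall>p\<in>Ain. a < fst p \<and> fst p < b" and Aout: "\<forall>p\<in>Aout. fst p < a \<or> b < fst p"
  shows "card (matchings_containing S (insert (a, b) (Ain \<union> Aout)))
       = card (matchings_containing (between a b S) Ain) * card (matchings_containing (outside a b S) Aout)"
proof -
  define join where "join = (\<lambda>(M1, M2). insert (a, b) (M1 \<union> M2))"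
  let ?D = "matchings_containing (between a b S) Ain \<times> matchings_containing (outside a b S) Aout"
  have parts: "M1 = {p\<in>join (M1, M2). a < fst p \<and> fst p < b}"
      "M2 = {p\<in>join (M1, M2). fst p < a \<or> b < fst p}" if "(M1, M2) \<in> ?D" for M1 M2
  proof -
    have M1: "M1 \<in> nc_matchings (between a b S)" and M2: "M2 \<in> nc_matchings (outside a b S)"
      using that unfolding matchings_containing_def by auto
    have "\<And>x y. (x, y) \<in> M1 \<Longrightarrow> a < x \<and> x < b"
      using nc_matching_arc[OF M1] unfolding between_def by blast
    moreover have "\<And>x y. (x, y) \<in> M2 \<Longrightarrow> x < a \<or> b < x"
      using nc_matching_arc[OF M2] unfolding outside_def by blast
    ultimately show "M1 = {p\<in>join (M1, M2). a < fst p \<and> fst p < b}"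
      "M2 = {p\<in>join (M1, M2). fst p < a \<or> b < fst p}"
      unfolding join_def using ab(1) by force+
  qed
  have "inj_on join ?D"
  proof (rule inj_onI)
    fix u v assume "u \<in> ?D" "v \<in> ?D" "join u = join v"
    then show "u = v" using parts[of "fst u" "snd u"] parts[of "fst v" "snd v"] by auto
  qed
  moreover have "join ` ?D = matchings_containing S (insert (a, b) (Ain \<union> Aout))"
  proof
    show "join ` ?D \<subseteq> matchings_containing S (insert (a, b) (Ain \<union> Aout))"
      using nc_matching_join[OF ab] unfolding matchings_containing_def join_def by auto
    show "matchings_containing S (insert (a, b) (Ain \<union> Aout)) \<subseteq> join ` ?D"
    proof
      fix M assume "M \<in> matchings_containing S (insert (a, b) (Ain \<union> Aout))"
      then have M: "M \<in> nc_matchings S" and As: "insert (a, b) (Ain \<union> Aout) \<subseteq> M"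
        unfolding matchings_containing_def by auto
      have abM: "(a, b) \<in> M" using As by auto
      let ?M1 = "{p\<in>M. a < fst p \<and> fst p < b}" and ?M2 = "{p\<in>M. fst p < a \<or> b < fst p}"
      have "(?M1, ?M2) \<in> ?D"
        using nc_matching_split(1,2)[OF ab(1) M abM] As Ain Aout
        unfolding matchings_containing_def by auto
      moreover have "M = join (?M1, ?M2)"
        using nc_matching_split(3)[OF ab(1) M abM] unfolding join_def by simp
      ultimately show "M \<in> join ` ?D" by blast
    qed
  qed
  ultimately show ?thesis by (metis card_image card_cartesian_product)
qed

lemma card_matchings_containing_arc:
  "a < b \<Longrightarrow> a \<in> S \<Longrightarrow> b \<in> S \<Longrightarrow> card (matchings_containing S {(a, b)})
     = card (nc_matchings (between a b S)) * card (nc_matchings (outside a b S))"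
  using card_matchings_containing_split[of a b S "{}" "{}"] by simp

lemma sum_by_rank:
  fixes A :: "nat set"
  assumes "finite A"
  shows "(\<Sum>b\<in>A. h (card {z\<in>A. z < b}) (card {z\<in>A. b < z})) = (\<Sum>j<card A. h j (card A - 1 - j))"
  using assms
proof (induction A arbitrary: h rule: finite_linorder_max_induct)
  case (insert m A)
  have below: "{z\<in>insert m A. z < b} = {z\<in>A. z < b}" and above: "{z\<in>insert m A. b < z} = insert m {z\<in>A. b < z}"
    if "b \<in> A" for b
    using insert that by auto
  have mA: "m \<notin> A" using insert by auto
  have lo: "{z\<in>insert m A. z < m} = A" and hi: "{z\<in>insert m A. m < z} = {}"
    using insert by auto
  have shift: "(\<Sum>b\<in>A. h (card {z\<in>insert m A. z < b}) (card {z\<in>insert m A. b < z}))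
      = (\<Sum>b\<in>A. h (card {z\<in>A. z < b}) (card {z\<in>A. b < z} + 1))"
  proof (rule sum.cong)
    fix b assume b: "b \<in> A"
    have "m \<notin> {z\<in>A. b < z}" "finite {z\<in>A. b < z}" using mA insert.hyps(1) by auto
    then show "h (card {z\<in>insert m A. z < b}) (card {z\<in>insert m A. b < z})
        = h (card {z\<in>A. z < b}) (card {z\<in>A. b < z} + 1)"
      unfolding below[OF b] above[OF b] by simp
  qed simp
  have "(\<Sum>b\<in>insert m A. h (card {z\<in>insert m A. z < b}) (card {z\<in>insert m A. b < z}))
      = h (card A) 0 + (\<Sum>b\<in>A. h (card {z\<in>A. z < b}) (card {z\<in>A. b < z} + 1))"
    unfolding sum.insert[OF insert.hyps(1) mA] lo hi shift by simp
  also have "\<dots> = h (card A) 0 + (\<Sum>j<card A. h j (card A - 1 - j + 1))"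
    using insert.IH[of "\<lambda>i j. h i (j + 1)"] by simp
  also have "\<dots> = h (card A) 0 + (\<Sum>j<card A. h j (card A - j))"
    by (intro arg_cong2[where f="(+)"] refl sum.cong) (auto simp: Suc_diff_Suc)
  also have "\<dots> = (\<Sum>j<card (insert m A). h j (card (insert m A) - 1 - j))"
    using insert mA by (simp add: lessThan_Suc)
  finally show ?case .
qed simp

lemma sum_even_odd_split: "(\<Sum>j<2 * (m::nat) + 1. g j) = (\<Sum>i\<le>m. g (2 * i)) + (\<Sum>i<m. g (2 * i + 1))"
  by (induction m) (simp_all add: lessThan_Suc atMost_Suc ac_simps)

definition matching_number :: "nat \<Rightarrow> real" where
  "matching_number k = (if even k then catalan (k div 2) else 0)"

lemma matching_number_convolution:
  "(\<Sum>j<k. matching_number j * matching_number (k - 1 - j)) = matching_number (Suc k)"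
proof (cases "even k")
  case True
  have "odd j \<or> odd (k - 1 - j)" if "j < k" for j
    using that True by (cases "even j") auto
  then show ?thesis using True by (auto simp: matching_number_def intro: sum.neutral)
next
  case False
  then obtain m where k: "k = 2 * m + 1" using oddE by blast
  have "(\<Sum>j<k. matching_number j * matching_number (k - 1 - j))
      = (\<Sum>i\<le>m. catalan i * catalan (m - i))"
    unfolding k sum_even_odd_split by (simp add: matching_number_def flip: diff_mult_distrib2)
  then show ?thesis by (simp add: k matching_number_def catalan_convolution)
qed

lemma card_nc_matchings: "finite S \<Longrightarrow> real (card (nc_matchings S)) = matching_number (card S)"
proof (induction "card S" arbitrary: S rule: less_induct)
  case less
  show ?case
  proof (cases "S = {}")
    case True then show ?thesis by (simp add: nc_matchings_empty matching_number_def)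
  next
    case False
    define a where "a = Min S"
    define A where "A = S - {a}"
    have aS: "a \<in> S" and amin: "\<And>z. z \<in> S \<Longrightarrow> a \<le> z"
      using False less.prems by (simp_all add: a_def)
    have finA: "finite A" and cS: "card S = Suc (card A)"
      using aS less.prems unfolding A_def by (simp, metis card_Suc_Diff1)
    txt \<open>The minimum \<open>a\<close> is matched to some \<open>b\<close>, which splits \<open>A\<close> into the points below and above \<open>b\<close>.\<close>
    have partner: "nc_matchings S = (\<Union>b\<in>A. matchings_containing S {(a, b)})"
    proof (intro equalityI subsetI)
      fix M assume M: "M \<in> nc_matchings S"
      obtain p where p: "p \<in> M" "a = fst p \<or> a = snd p" using nc_matching_covers[OF M aS] by blast
      then have "a = fst p" "snd p \<in> A"
        using nc_matching_arc[OF M, of "fst p" "snd p"] amin[of "fst p"] by (auto simp: A_def)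
      then show "M \<in> (\<Union>b\<in>A. matchings_containing S {(a, b)})"
        using M p(1) unfolding matchings_containing_def by (auto intro!: bexI[of _ "snd p"])
    qed (auto simp: matchings_containing_def)
    have disjoint: "matchings_containing S {(a, b)} \<inter> matchings_containing S {(a, b')} = {}"
      if "b \<noteq> b'" for b b'
      using that nc_matching_unique[of _ S "(a, b)" "(a, b')" a] unfolding matchings_containing_def by auto
    have card_arc: "real (card (matchings_containing S {(a, b)}))
        = matching_number (card {z\<in>A. z < b}) * matching_number (card {z\<in>A. b < z})" if b: "b \<in> A" for b
    proof -
      have ab: "a < b" "b \<in> S" using b amin[of b] by (auto simp: A_def)
      have "between a b S = {z\<in>A. z < b}" "outside a b S = {z\<in>A. b < z}"
        using amin ab unfolding between_def outside_def A_def by force+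
      moreover have "card {z\<in>A. z < b} < card S" "card {z\<in>A. b < z} < card S"
        using card_mono[OF finA, of "{z\<in>A. z < b}"] card_mono[OF finA, of "{z\<in>A. b < z}"] cS by auto
      ultimately show ?thesis
        using card_matchings_containing_arc[OF ab(1) aS ab(2)] less.hyps finA by simp
    qed
    have "real (card (nc_matchings S)) = (\<Sum>b\<in>A. real (card (matchings_containing S {(a, b)})))"
      unfolding partner using finA finite_nc_matchings[OF less.prems] disjoint
      by (subst card_UN_disjoint) (auto simp: matchings_containing_def)
    also have "\<dots> = (\<Sum>j<card A. matching_number j * matching_number (card A - 1 - j))"
      using card_arc sum_by_rank[OF finA] by simp
    also have "\<dots> = matching_number (card S)"
      unfolding cS by (rule matching_number_convolution)
    finally show ?thesis .
  qed
qed

lemma nc_matchings_nonempty: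
  assumes "finite S" "even (card S)"
  shows "card (nc_matchings S) > 0"
  using card_nc_matchings[OF assms(1)] catalan_pos[of "card S div 2"] assms(2)
  by (simp add: matching_number_def)

section \<open>Matchings containing prescribed arcs\<close>

definition arc_weight :: "nat \<times> nat \<Rightarrow> real" where
  "arc_weight p = 1 / (8 * real (snd p - fst p) powr (3/2))"

lemma arc_weight_nonneg: "arc_weight p \<ge> 0"
  by (simp add: arc_weight_def)

lemma card_matchings_containing_arc_ge:
  assumes fin: "finite S" and ev: "even (card S)" and ab: "a < b" "a \<in> S" "b \<in> S"
    and ev_between: "even (card (between a b S))"
  shows "real (card (matchings_containing S {(a, b)})) \<ge> real (card (nc_matchings S)) * arc_weight (a, b)"
proof -
  obtain j where j: "card (between a b S) = 2 * j" using ev_between by blast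
  obtain m where m: "card S = 2 * m" using ev by blast
  have "card S = card (between a b S) + card (outside a b S) + 2"
    by (rule card_between_outside[OF fin ab])
  then have out: "card (outside a b S) = 2 * (m - 1 - j)" and mj: "m = (m - 1 - j) + Suc j"
    using j m by auto
  have fins: "finite (between a b S)" "finite (outside a b S)"
    using fin by (auto simp: between_def outside_def)
  have arc: "real (card (matchings_containing S {(a, b)})) = catalan j * catalan (m - 1 - j)"
    using card_matchings_containing_arc[OF ab] card_nc_matchings[OF fins(1)] card_nc_matchings[OF fins(2)] j out
    by (simp add: matching_number_def)
  have all: "real (card (nc_matchings S)) = catalan m"
    using card_nc_matchings[OF fin] m by (simp add: matching_number_def)
  have "real j + 1 \<le> real (b - a)" using card_between_le[of a b S] j ab by simp
  then have "arc_weight (a, b) \<le> 1 / (8 * (real j + 1) powr (3/2))"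
    unfolding arc_weight_def by (simp add: frac_le powr_mono2)
  also have "\<dots> \<le> catalan j / 4^Suc j" by (rule catalan_lower_bound)
  finally have w: "arc_weight (a, b) \<le> catalan j / 4^Suc j" .
  have "real (card (nc_matchings S)) * arc_weight (a, b) \<le> catalan m * (catalan j / 4^Suc j)"
    unfolding all using w catalan_pos[of m] by (intro mult_left_mono) auto
  also have "\<dots> \<le> (4^Suc j * catalan (m - 1 - j)) * (catalan j / 4^Suc j)"
    using catalan_add_le[of "m - 1 - j" "Suc j"] mj catalan_pos[of j] by (intro mult_right_mono) auto
  also have "\<dots> = real (card (matchings_containing S {(a, b)}))" by (simp add: arc)
  finally show ?thesis .
qed

definition compatible_arcs :: "nat set \<Rightarrow> (nat \<times> nat) set \<Rightarrow> bool" where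
  "compatible_arcs S As \<longleftrightarrow>
     (\<forall>(c, d)\<in>As. c < d \<and> c \<in> S \<and> d \<in> S \<and> even (card (between c d S))) \<and>
     (\<forall>p\<in>As. \<forall>q\<in>As. p \<noteq> q \<longrightarrow> {fst p, snd p} \<inter> {fst q, snd q} = {}) \<and>
     (\<forall>(c, d)\<in>As. \<forall>(e, f)\<in>As. \<not> (c < e \<and> e < d \<and> d < f))"

lemma compatible_arcsD:
  assumes "compatible_arcs S As"
  shows compatible_arc: "(c, d) \<in> As \<Longrightarrow> c < d \<and> c \<in> S \<and> d \<in> S \<and> even (card (between c d S))"
    and compatible_arcs_disjoint: "p \<in> As \<Longrightarrow> q \<in> As \<Longrightarrow> p \<noteq> q \<Longrightarrow> {fst p, snd p} \<inter> {fst q, snd q} = {}"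
    and compatible_arcs_no_crossing: "(c, d) \<in> As \<Longrightarrow> (e, f) \<in> As \<Longrightarrow> \<not> (c < e \<and> e < d \<and> d < f)"
  using assms unfolding compatible_arcs_def by fast+

text \<open>Splitting a compatible family at a longest arc \<open>(a, b)\<close>: every other arc lies strictly inside or
  strictly outside it, and maximality excludes arcs enclosing \<open>(a, b)\<close>.\<close>
lemma compatible_arcs_split:
  assumes ok: "compatible_arcs S As" and ab: "(a, b) \<in> As"
    and longest: "\<forall>p\<in>As. snd p - fst p \<le> b - a"
  defines "Ain \<equiv> {p\<in>As. a < fst p \<and> fst p < b}" and "Aout \<equiv> {p\<in>As. fst p < a \<or> b < fst p}"
  shows "As = insert (a, b) (Ain \<union> Aout)" and "(a, b) \<notin> Ain \<union> Aout"
    and "compatible_arcs (between a b S) Ain" and "compatible_arcs (outside a b S) Aout"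
proof -
  have lt: "a < b" using compatible_arc[OF ok ab] by simp
  have other: "c \<noteq> a \<and> c \<noteq> b \<and> d \<noteq> a \<and> d \<noteq> b" if "(c, d) \<in> As" "(c, d) \<noteq> (a, b)" for c d
    using compatible_arcs_disjoint[OF ok that(1) ab that(2)] by auto
  show "As = insert (a, b) (Ain \<union> Aout)"
    using ab other unfolding Ain_def Aout_def by fastforce
  show "(a, b) \<notin> Ain \<union> Aout" using lt unfolding Ain_def Aout_def by auto
  have inner: "a < c \<and> d < b" if "(c, d) \<in> Ain" for c d
    using that other[of c d] compatible_arc[OF ok, of c d] compatible_arcs_no_crossing[OF ok ab, of c d]
    unfolding Ain_def by fastforce
  have outer: "(d < a) \<or> (b < c)" if "(c, d) \<in> Aout" for c d
    using that other[of c d] compatible_arc[OF ok, of c d] compatible_arcs_no_crossing[OF ok _ ab, of c d]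
      bspec[OF longest, of "(c, d)"] lt
    unfolding Aout_def by fastforce
  show "compatible_arcs (between a b S) Ain"
    unfolding compatible_arcs_def
  proof (intro conjI)
    show "\<forall>(c, d)\<in>Ain. c < d \<and> c \<in> between a b S \<and> d \<in> between a b S \<and> even (card (between c d (between a b S)))"
    proof clarify
      fix c d assume cd: "(c, d) \<in> Ain"
      then have "between c d (between a b S) = between c d S"
        using inner[OF cd] unfolding between_def by auto
      then show "c < d \<and> c \<in> between a b S \<and> d \<in> between a b S \<and> even (card (between c d (between a b S)))"
        using compatible_arc[OF ok, of c d] inner[OF cd] cd unfolding Ain_def between_def by auto
    qed
  qed (use compatible_arcs_disjoint[OF ok] compatible_arcs_no_crossing[OF ok] in \<open>auto simp: Ain_def\<close>)
  show "compatible_arcs (outside a b S) Aout"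
    unfolding compatible_arcs_def
  proof (intro conjI)
    show "\<forall>(c, d)\<in>Aout. c < d \<and> c \<in> outside a b S \<and> d \<in> outside a b S \<and> even (card (between c d (outside a b S)))"
    proof clarify
      fix c d assume cd: "(c, d) \<in> Aout"
      have "c < d" using compatible_arc[OF ok, of c d] cd unfolding Aout_def by auto
      then have "between c d (outside a b S) = between c d S"
        using outer[OF cd] unfolding between_def outside_def by auto
      then show "c < d \<and> c \<in> outside a b S \<and> d \<in> outside a b S \<and> even (card (between c d (outside a b S)))"
        using compatible_arc[OF ok, of c d] outer[OF cd] cd unfolding Aout_def outside_def by auto
    qed
  qed (use compatible_arcs_disjoint[OF ok] compatible_arcs_no_crossing[OF ok] in \<open>auto simp: Aout_def\<close>)
qed

lemma exists_longest_arc: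
  assumes "finite As" "As \<noteq> {}"
  obtains a b where "(a, b) \<in> As" "\<forall>p\<in>As. snd p - fst p \<le> b - (a :: nat)"
proof -
  let ?len = "\<lambda>p. snd p - fst p"
  have "Max (?len ` As) \<in> ?len ` As" using assms by (intro Max_in) auto
  then obtain a b where ab: "(a, b) \<in> As" and max: "Max (?len ` As) = b - a" by auto
  have "\<forall>p\<in>As. ?len p \<le> b - a"
    using assms(1) by (auto simp flip: max intro: Max_ge)
  with ab show thesis by (rule that)
qed

text \<open>Split at a longest arc and induct on both sides.\<close>
lemma card_matchings_containing_ge:
  assumes "finite As" "finite S" "even (card S)" "compatible_arcs S As"
  shows "real (card (matchings_containing S As)) \<ge> real (card (nc_matchings S)) * (\<Prod>p\<in>As. arc_weight p)"
  using assms
proof (induction "card As" arbitrary: As S rule: less_induct)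
  case less
  note fin = less.prems(1,2) and ev = less.prems(3) and ok = less.prems(4)
  show ?case
  proof (cases "As = {}")
    case False
    obtain a b where ab: "(a, b) \<in> As" and longest: "\<forall>p\<in>As. snd p - fst p \<le> b - a"
      using exists_longest_arc[OF fin(1) False] by blast
    define Ain where "Ain = {p\<in>As. a < fst p \<and> fst p < b}"
    define Aout where "Aout = {p\<in>As. fst p < a \<or> b < fst p}"
    note split = compatible_arcs_split[OF ok ab longest, folded Ain_def Aout_def]
    have arc: "a < b" "a \<in> S" "b \<in> S" "even (card (between a b S))"
      using compatible_arc[OF ok ab] by auto
    have fins: "finite (between a b S)" "finite (outside a b S)" "finite Ain" "finite Aout"
      using fin by (auto simp: between_def outside_def Ain_def Aout_def)
    have "even (card (outside a b S))"
      using card_between_outside[OF fin(2) arc(1-3)] ev arc(4) by simp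
    moreover have "Ain \<subset> As" "Aout \<subset> As" using split(1,2) by auto
    then have "card Ain < card As" "card Aout < card As"
      using fin(1) by (auto intro: psubset_card_mono)
    ultimately have IH:
      "real (card (matchings_containing (between a b S) Ain))
         \<ge> real (card (nc_matchings (between a b S))) * (\<Prod>p\<in>Ain. arc_weight p)"
      "real (card (matchings_containing (outside a b S) Aout))
         \<ge> real (card (nc_matchings (outside a b S))) * (\<Prod>p\<in>Aout. arc_weight p)"
      using less.hyps fins arc(4) split(3,4) by blast+
    have W: "(\<Prod>p\<in>As. arc_weight p) = arc_weight (a, b) * ((\<Prod>p\<in>Ain. arc_weight p) * (\<Prod>p\<in>Aout. arc_weight p))"
    proof -
      have "Ain \<inter> Aout = {}" unfolding Ain_def Aout_def by auto
      then show ?thesis using split(2) fins(3,4) by (subst split(1)) (simp add: prod.union_disjoint)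
    qed
    have W_nonneg: "(\<Prod>p\<in>Ain. arc_weight p) \<ge> 0" "(\<Prod>p\<in>Aout. arc_weight p) \<ge> 0"
      by (simp_all add: prod_nonneg arc_weight_nonneg)
    have "real (card (nc_matchings S)) * (\<Prod>p\<in>As. arc_weight p)
        = (real (card (nc_matchings S)) * arc_weight (a, b)) * ((\<Prod>p\<in>Ain. arc_weight p) * (\<Prod>p\<in>Aout. arc_weight p))"
      by (simp add: W)
    also have "\<dots> \<le> real (card (matchings_containing S {(a, b)})) * ((\<Prod>p\<in>Ain. arc_weight p) * (\<Prod>p\<in>Aout. arc_weight p))"
      using card_matchings_containing_arc_ge[OF fin(2) ev arc] W_nonneg by (intro mult_right_mono) auto
    also have "\<dots> = (real (card (nc_matchings (between a b S))) * (\<Prod>p\<in>Ain. arc_weight p))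
        * (real (card (nc_matchings (outside a b S))) * (\<Prod>p\<in>Aout. arc_weight p))"
      by (simp add: card_matchings_containing_arc[OF arc(1-3)])
    also have "\<dots> \<le> real (card (matchings_containing (between a b S) Ain))
        * real (card (matchings_containing (outside a b S) Aout))"
      using IH W_nonneg by (intro mult_mono) auto
    also have "\<dots> = real (card (matchings_containing S As))"
      using card_matchings_containing_split[OF arc(1-3), of Ain Aout] split(1)
      unfolding Ain_def Aout_def by simp
    finally show ?thesis .
  qed simp
qed

section \<open>Counting solutions of parity constraints\<close>

definition toggle :: "'a \<Rightarrow> 'a set \<Rightarrow> 'a set" where
  "toggle x R = (if x \<in> R then R - {x} else insert x R)"

lemma toggle_toggle [simp]: "toggle x (toggle x R) = R"
  by (auto simp: toggle_def)

lemma toggle_Int_other: "x \<notin> T \<Longrightarrow> toggle x R \<inter> T = R \<inter> T"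
  by (auto simp: toggle_def)

lemma even_card_toggle_Int:
  assumes "finite R" "x \<in> T"
  shows "even (card (toggle x R \<inter> T)) \<longleftrightarrow> odd (card (R \<inter> T))"
proof (cases "x \<in> R")
  case True
  then have "toggle x R \<inter> T = (R \<inter> T) - {x}" by (auto simp: toggle_def)
  then have "Suc (card (toggle x R \<inter> T)) = card (R \<inter> T)"
    using assms True card_Suc_Diff1[of "R \<inter> T" x] by simp
  then show ?thesis by (metis even_Suc)
next
  case False
  then have "card (toggle x R \<inter> T) = Suc (card (R \<inter> T))"
    using assms by (simp add: toggle_def)
  then show ?thesis by simp
qed

definition parity_sets :: "'a set \<Rightarrow> 'i set \<Rightarrow> ('i \<Rightarrow> 'a set) \<Rightarrow> ('i \<Rightarrow> bool) \<Rightarrow> 'a set set" where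
  "parity_sets V I T c = {R. R \<subseteq> V \<and> (\<forall>i\<in>I. even (card (R \<inter> T i)) = c i)}"

lemma parity_setsD:
  assumes "R \<in> parity_sets V I T c"
  shows "R \<subseteq> V" and "i \<in> I \<Longrightarrow> even (card (R \<inter> T i)) = c i"
  using assms unfolding parity_sets_def by auto

text \<open>Toggling a pivot \<open>x\<close> that meets only the new constraint \<open>T i\<close> swaps the sets satisfying it with
  those violating it.\<close>
lemma card_parity_sets_insert:
  assumes V: "finite V" and x: "x \<in> T i" "x \<in> V" and other: "\<And>j. j \<in> I \<Longrightarrow> x \<notin> T j"
  shows "2 * card (parity_sets V (insert i I) T c) = card (parity_sets V I T c)"
proof -
  let ?A = "parity_sets V (insert i I) T c"
  let ?B = "{R \<in> parity_sets V I T c. even (card (R \<inter> T i)) \<noteq> c i}"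
  have fin: "finite (parity_sets V I T c)" using V unfolding parity_sets_def by simp
  have finR: "finite R" if "R \<in> parity_sets V I T c" for R
    using that V unfolding parity_sets_def by (auto intro: finite_subset)
  have parts: "parity_sets V I T c = ?A \<union> ?B" "?A \<inter> ?B = {}"
    unfolding parity_sets_def by auto
  have toggle_in: "toggle x R \<in> parity_sets V I T c" if "R \<in> parity_sets V I T c" for R
    using that x(2) toggle_Int_other[OF other] unfolding parity_sets_def toggle_def by auto
  have "toggle x ` ?A = ?B"
  proof (intro equalityI subsetI)
    fix R' assume "R' \<in> toggle x ` ?A"
    then obtain R where R: "R \<in> ?A" "R' = toggle x R" by auto
    then have RI: "R \<in> parity_sets V I T c" and "even (card (R \<inter> T i)) = c i"
      unfolding parity_sets_def by auto
    then show "R' \<in> ?B"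
      using toggle_in[OF RI] even_card_toggle_Int[OF finR[OF RI] x(1)] R(2) by auto
  next
    fix R assume R: "R \<in> ?B"
    then have "toggle x R \<in> ?A"
      using toggle_in even_card_toggle_Int[OF finR x(1)] unfolding parity_sets_def by auto
    then show "R \<in> toggle x ` ?A" using image_eqI[of R "toggle x" "toggle x R"] by simp
  qed
  moreover have "inj_on (toggle x) ?A" by (metis toggle_toggle inj_onI)
  ultimately have same: "card ?B = card ?A" using card_image by metis
  have "card (?A \<union> ?B) = card ?A + card ?B"
    using fin parts by (intro card_Un_disjoint) (auto intro: rev_finite_subset)
  then have "card (parity_sets V I T c) = card ?A + card ?B"
    by (simp only: parts(1)[symmetric])
  then show ?thesis using same by simp
qed

text \<open>Constraints with pivots \<open>p i \<in> T i\<close> that lie in no later constraint are independent: each one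
  halves the number of solutions.\<close>
lemma card_parity_sets:
  fixes order :: "'i \<Rightarrow> nat"
  assumes "finite V" "finite I" "\<forall>i\<in>I. T i \<subseteq> V \<and> p i \<in> T i"
    and "\<forall>i\<in>I. \<forall>j\<in>I. i \<noteq> j \<and> order i \<le> order j \<longrightarrow> p i \<notin> T j"
  shows "card (parity_sets V I T c) * 2 ^ card I = 2 ^ card V"
  using assms(2-)
proof (induction "card I" arbitrary: I rule: less_induct)
  case less
  show ?case
  proof (cases "I = {}")
    case True
    then have "parity_sets V I T c = Pow V" by (auto simp: parity_sets_def)
    then show ?thesis using True assms(1) by (simp add: card_Pow)
  next
    case False
    have "Min (order ` I) \<in> order ` I" using less.prems(1) False by (intro Min_in) auto
    then obtain i where i: "i \<in> I" and "order i = Min (order ` I)" by auto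
    then have first: "\<And>j. j \<in> I \<Longrightarrow> order i \<le> order j"
      using less.prems(1) by simp
    define I' where "I' = I - {i}"
    have I: "I = insert i I'" using i unfolding I'_def by auto
    have cI: "card I = Suc (card I')"
      using i less.prems(1) unfolding I'_def by (metis card_Suc_Diff1)
    have "card (parity_sets V I' T c) * 2 ^ card I' = 2 ^ card V"
      using less.hyps[of I'] cI less.prems unfolding I'_def by auto
    moreover have "2 * card (parity_sets V (insert i I') T c) = card (parity_sets V I' T c)"
      using less.prems i first by (intro card_parity_sets_insert[OF assms(1)]) (auto simp: I'_def)
    ultimately show ?thesis using cI I by (metis mult.assoc mult.commute power_Suc)
  qed
qed

section \<open>Good quadruples\<close>

definition apart :: "nat \<Rightarrow> nat \<Rightarrow> bool" where
  "apart u v \<longleftrightarrow> u + 2 \<le> v \<or> v + 2 \<le> u"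

lemma apart_imp_neq: "apart u v \<Longrightarrow> u \<noteq> v"
  by (auto simp: apart_def)

locale good_quadruple =
  fixes n :: nat and xs ks ys ls :: "nat list"
  assumes good: "good n xs ks ys ls"
begin

abbreviation "nred \<equiv> length xs"
abbreviation "nblue \<equiv> length ys"

definition endpoints :: "nat list" where
  "endpoints = xs @ map2 (+) xs ks @ ys @ map2 (+) ys ls"

lemma length_ks: "length ks = nred"
  using good unfolding good_def by (elim conjE)

lemma length_ls: "length ls = nblue"
  using good unfolding good_def by (elim conjE)

lemma red_range: "\<forall>i<nred. 1 \<le> xs!i \<and> xs!i < xs!i + ks!i \<and> xs!i + ks!i \<le> 2 * n"
  using good unfolding good_def by (elim conjE)

lemma blue_range: "\<forall>j<nblue. 1 \<le> ys!j \<and> ys!j < ys!j + ls!j \<and> ys!j + ls!j \<le> 2 * n"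
  using good unfolding good_def by (elim conjE)

lemma red_no_crossing: "\<not> (\<exists>i<nred. \<exists>j<nred. i \<noteq> j \<and>
    xs!i < xs!j \<and> xs!j < xs!i + ks!i \<and> xs!i + ks!i < xs!j + ks!j)"
  using good unfolding good_def by (elim conjE)

lemma blue_no_crossing: "\<not> (\<exists>i<nblue. \<exists>j<nblue. i \<noteq> j \<and>
    ys!i < ys!j \<and> ys!j < ys!i + ls!i \<and> ys!i + ls!i < ys!j + ls!j)"
  using good unfolding good_def by (elim conjE)

lemma length_endpoints: "length endpoints = 2 * nred + 2 * nblue"
  using length_ks length_ls unfolding endpoints_def by simp

lemma endpoints_apart:
  assumes "i < length endpoints" "j < length endpoints" "i \<noteq> j"
  shows "apart (endpoints!i) (endpoints!j)"
proof -
  have "let E = xs @ map2 (+) xs ks @ ys @ map2 (+) ys ls in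
      \<forall>i<length E. \<forall>j<length E. i \<noteq> j \<longrightarrow> E!i + 2 \<le> E!j \<or> E!j + 2 \<le> E!i"
    using good unfolding good_def by (elim conjE)
  then show ?thesis using assms unfolding endpoints_def[symmetric] Let_def apart_def by blast
qed

text \<open>Arc \<open>q\<close> is the red arc \<open>q\<close> for \<open>q < nred\<close> and the blue arc \<open>q - nred\<close> otherwise; its endpoints
  sit at positions \<open>left_slot q\<close> and \<open>right_slot q\<close> of \<open>endpoints\<close>.\<close>
definition arc :: "nat \<Rightarrow> nat \<times> nat \<times> bool" where
  "arc q = (if q < nred then (xs!q, xs!q + ks!q, True)
            else (ys!(q - nred), ys!(q - nred) + ls!(q - nred), False))"

definition left_slot :: "nat \<Rightarrow> nat" where
  "left_slot q = (if q < nred then q else 2 * nred + (q - nred))"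

definition right_slot :: "nat \<Rightarrow> nat" where
  "right_slot q = (if q < nred then nred + q else 2 * nred + nblue + (q - nred))"

definition arcs :: "(nat \<times> nat \<times> bool) set" where
  "arcs = arc ` {..<nred + nblue}"

lemma arc_slots:
  assumes "q < nred + nblue"
  shows "arc q = (endpoints!left_slot q, endpoints!right_slot q, q < nred)"
  using assms length_ks length_ls
  by (auto simp: arc_def left_slot_def right_slot_def endpoints_def nth_append)

lemma slots_less: "q < nred + nblue \<Longrightarrow> left_slot q < length endpoints \<and> right_slot q < length endpoints"
  unfolding left_slot_def right_slot_def length_endpoints by auto

lemma slots_inj:
  "q < nred + nblue \<Longrightarrow> r < nred + nblue \<Longrightarrow> left_slot q = left_slot r \<Longrightarrow> q = r"
  "q < nred + nblue \<Longrightarrow> r < nred + nblue \<Longrightarrow> right_slot q = right_slot r \<Longrightarrow> q = r"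
  "q < nred + nblue \<Longrightarrow> r < nred + nblue \<Longrightarrow> left_slot q \<noteq> right_slot r"
  unfolding left_slot_def right_slot_def by (auto split: if_splits)

lemma red_arc: "i < nred \<Longrightarrow> (xs!i, xs!i + ks!i, True) \<in> arcs"
  unfolding arcs_def by (rule image_eqI[of _ _ i]) (simp_all add: arc_def)

lemma blue_arc: "j < nblue \<Longrightarrow> (ys!j, ys!j + ls!j, False) \<in> arcs"
  unfolding arcs_def by (rule image_eqI[of _ _ "nred + j"]) (simp_all add: arc_def)

lemma arcs_bounds: "(a, b, col) \<in> arcs \<Longrightarrow> 1 \<le> a \<and> a + 2 \<le> b \<and> b \<le> 2 * n"
proof -
  assume "(a, b, col) \<in> arcs"
  then obtain q where q: "q < nred + nblue" "(a, b, col) = arc q" unfolding arcs_def by auto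
  have "1 \<le> a \<and> a < b \<and> b \<le> 2 * n"
    using red_range blue_range q length_ks length_ls unfolding arc_def by (auto split: if_splits)
  moreover have "apart a b"
    using q arc_slots[OF q(1)] endpoints_apart[of "left_slot q" "right_slot q"] slots_less[OF q(1)]
      slots_inj(3)[OF q(1) q(1)] by auto
  ultimately show ?thesis unfolding apart_def by auto
qed

lemma arcs_apart:
  assumes "(a, b, col) \<in> arcs" "(a', b', col') \<in> arcs" "(a, b, col) \<noteq> (a', b', col')"
  shows "apart a a'" "apart a b'" "apart b a'" "apart b b'"
proof -
  obtain q r where q: "q < nred + nblue" "(a, b, col) = arc q" and r: "r < nred + nblue" "(a', b', col') = arc r"
    using assms(1,2) unfolding arcs_def by auto
  then have "q \<noteq> r" using assms(3) by auto
  then have "left_slot q \<noteq> left_slot r" "left_slot q \<noteq> right_slot r"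
    "right_slot q \<noteq> left_slot r" "right_slot q \<noteq> right_slot r"
    using slots_inj[OF q(1) r(1)] slots_inj(3)[OF r(1) q(1)] by auto
  then show "apart a a'" "apart a b'" "apart b a'" "apart b b'"
    using endpoints_apart slots_less[OF q(1)] slots_less[OF r(1)] arc_slots[OF q(1)] arc_slots[OF r(1)] q r
    by auto
qed

lemma arcs_no_crossing:
  assumes "(a, b, col) \<in> arcs" "(a', b', col) \<in> arcs"
  shows "\<not> (a < a' \<and> a' < b \<and> b < b')"
proof -
  obtain q r where q: "q < nred + nblue" "(a, b, col) = arc q" and r: "r < nred + nblue" "(a', b', col) = arc r"
    using assms unfolding arcs_def by auto
  have "(q < nred) = (r < nred)" using q r by (auto simp: arc_def split: if_splits)
  then show ?thesis
  proof (cases "q < nred")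
    case True
    then show ?thesis using red_no_crossing q r \<open>(q < nred) = (r < nred)\<close> by (auto simp: arc_def)
  next
    case False
    then have "q - nred < nblue" "r - nred < nblue" "q - nred \<noteq> r - nred \<or> q = r"
      using q(1) r(1) \<open>(q < nred) = (r < nred)\<close> by auto
    then show ?thesis using blue_no_crossing q r False \<open>(q < nred) = (r < nred)\<close> by (auto simp: arc_def)
  qed
qed

lemma red_arc_inj: "inj_on (\<lambda>i. (xs!i, xs!i + ks!i)) {..<nred}"
proof (rule inj_onI)
  fix i j assume "i \<in> {..<nred}" "j \<in> {..<nred}" "(xs!i, xs!i + ks!i) = (xs!j, xs!j + ks!j)"
  show "i = j"
  proof (rule ccontr)
    assume "i \<noteq> j"
    then have "apart (endpoints!i) (endpoints!j)"
      using endpoints_apart \<open>i \<in> {..<nred}\<close> \<open>j \<in> {..<nred}\<close> length_endpoints by simp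
    moreover have "endpoints!i = xs!i" "endpoints!j = xs!j"
      using \<open>i \<in> {..<nred}\<close> \<open>j \<in> {..<nred}\<close> unfolding endpoints_def by (simp_all add: nth_append)
    ultimately show False using apart_imp_neq \<open>(xs!i, xs!i + ks!i) = (xs!j, xs!j + ks!j)\<close> by auto
  qed
qed

lemma blue_arc_inj: "inj_on (\<lambda>j. (ys!j, ys!j + ls!j)) {..<nblue}"
proof (rule inj_onI)
  fix i j assume "i \<in> {..<nblue}" "j \<in> {..<nblue}" "(ys!i, ys!i + ls!i) = (ys!j, ys!j + ls!j)"
  show "i = j"
  proof (rule ccontr)
    assume "i \<noteq> j"
    then have "apart (endpoints!(2 * nred + i)) (endpoints!(2 * nred + j))"
      using endpoints_apart \<open>i \<in> {..<nblue}\<close> \<open>j \<in> {..<nblue}\<close> length_endpoints by simp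
    moreover have "endpoints!(2 * nred + i) = ys!i" "endpoints!(2 * nred + j) = ys!j"
      using length_ks \<open>i \<in> {..<nblue}\<close> \<open>j \<in> {..<nblue}\<close>
      unfolding endpoints_def by (simp_all add: nth_append)
    ultimately show False using apart_imp_neq \<open>(ys!i, ys!i + ls!i) = (ys!j, ys!j + ls!j)\<close> by auto
  qed
qed

end

section \<open>Admissible red sets\<close>

text \<open>The conditions on a red set \<open>R\<close> in the event \<open>A\<close> are parity conditions: \<open>Interior a b col\<close>
  prescribes the parity of \<open>R\<close> on \<open>{a<..<b}\<close>, \<open>Endpoint e col\<close> whether \<open>e \<in> R\<close>, and \<open>Total\<close> the
  parity of \<open>R\<close> on an auxiliary set, from which that of \<open>R\<close> itself follows.\<close>
datatype constraint = Interior nat nat bool | Endpoint nat bool | Total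

context good_quadruple
begin

definition points :: "nat set" where
  "points = {1..2 * n}"

definition colour_class :: "nat set \<Rightarrow> bool \<Rightarrow> nat set" where
  "colour_class R col = (if col then R else points - R)"

definition arc_ok :: "nat set \<Rightarrow> nat \<times> nat \<times> bool \<Rightarrow> bool" where
  "arc_ok R \<alpha> = (case \<alpha> of (a, b, col) \<Rightarrow>
     a \<in> colour_class R col \<and> b \<in> colour_class R col \<and> even (card (between a b (colour_class R col))))"

definition admissible :: "nat set set" where
  "admissible = {R. R \<subseteq> points \<and> even (card R) \<and> (\<forall>\<alpha>\<in>arcs. arc_ok R \<alpha>)}"

definition constraint_set :: "nat set \<Rightarrow> constraint \<Rightarrow> nat set" where
  "constraint_set T i = (case i of Interior a b col \<Rightarrow> {a<..<b} | Endpoint e col \<Rightarrow> {e} | Total \<Rightarrow> T)"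

text \<open>A blue arc \<open>(a, b)\<close> needs an even number of blue points inside, i.e. \<open>R\<close> must have the parity
  of \<open>b - a - 1\<close> on \<open>{a<..<b}\<close>.\<close>
definition constraint_parity :: "bool \<Rightarrow> constraint \<Rightarrow> bool" where
  "constraint_parity c i =
     (case i of Interior a b col \<Rightarrow> col \<or> even (b - a - 1) | Endpoint e col \<Rightarrow> \<not> col | Total \<Rightarrow> c)"

definition pivot :: "nat \<Rightarrow> constraint \<Rightarrow> nat" where
  "pivot p i = (case i of Interior a b col \<Rightarrow> a + 1 | Endpoint e col \<Rightarrow> e | Total \<Rightarrow> p)"

definition rank :: "nat \<Rightarrow> constraint \<Rightarrow> nat" where
  "rank r i = (case i of Interior a b col \<Rightarrow> a | Endpoint e col \<Rightarrow> 2 * n + 1 + e | Total \<Rightarrow> r)"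

definition arc_constraints :: "constraint set" where
  "arc_constraints = (\<lambda>(a, b, col). Interior a b col) ` arcs
     \<union> (\<lambda>(a, b, col). Endpoint a col) ` arcs \<union> (\<lambda>(a, b, col). Endpoint b col) ` arcs"

lemma finite_arc_constraints: "finite arc_constraints"
  unfolding arc_constraints_def arcs_def by simp

lemma card_arc_constraints: "card arc_constraints \<le> 3 * (nred + nblue)"
proof -
  have "card arcs \<le> nred + nblue"
    unfolding arcs_def using card_image_le[of "{..<nred + nblue}" arc] by simp
  moreover have "card arc_constraints \<le> card arcs + card arcs + card arcs"
    unfolding arc_constraints_def
    by (intro card_Un_le[THEN order_trans] add_mono card_image_le) (auto simp: arcs_def)
  ultimately show ?thesis by simp
qed

lemma Interior_in_arc_constraints: "Interior a b col \<in> arc_constraints \<Longrightarrow> (a, b, col) \<in> arcs"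
  unfolding arc_constraints_def by auto

lemma Endpoint_in_arc_constraints:
  "Endpoint e col \<in> arc_constraints \<Longrightarrow> \<exists>a b. (a, b, col) \<in> arcs \<and> (e = a \<or> e = b)"
  unfolding arc_constraints_def by auto

lemma Total_notin_arc_constraints: "Total \<notin> arc_constraints"
  unfolding arc_constraints_def by auto

lemma arc_constraints_pivot:
  assumes "i \<in> arc_constraints"
  shows "constraint_set T i \<subseteq> points \<and> pivot p i \<in> constraint_set T i"
proof (cases i)
  case (Interior a b col)
  then have "(a, b, col) \<in> arcs" using assms Interior_in_arc_constraints by simp
  then show ?thesis
    using arcs_bounds[of a b col] Interior by (auto simp: constraint_set_def pivot_def points_def)
next
  case (Endpoint e col)
  then obtain a b where "(a, b, col) \<in> arcs" "e = a \<or> e = b"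
    using assms Endpoint_in_arc_constraints by blast
  then show ?thesis
    using arcs_bounds[of a b col] Endpoint by (auto simp: constraint_set_def pivot_def points_def)
qed (use assms Total_notin_arc_constraints in simp)

lemma arc_constraints_pivot_later:
  assumes i: "i \<in> arc_constraints" and j: "j \<in> arc_constraints" and "i \<noteq> j" "rank r i \<le> rank r j"
  shows "pivot p i \<notin> constraint_set T j"
proof (cases i)
  case (Interior a b col)
  then have ia: "(a, b, col) \<in> arcs" using i Interior_in_arc_constraints by simp
  show ?thesis
  proof (cases j)
    case (Interior a' b' col')
    then have ja: "(a', b', col') \<in> arcs" and "a \<le> a'" "(a, b, col) \<noteq> (a', b', col')"
      using j Interior_in_arc_constraints assms(3,4) \<open>i = Interior a b col\<close> by (auto simp: rank_def)
    then have "a + 2 \<le> a'" using arcs_apart(1)[OF ia ja] unfolding apart_def by auto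
    then show ?thesis using Interior \<open>i = Interior a b col\<close> by (simp add: pivot_def constraint_set_def)
  next
    case (Endpoint e col')
    then obtain a' b' where ja: "(a', b', col') \<in> arcs" "e = a' \<or> e = b'"
      using j Endpoint_in_arc_constraints by blast
    have "a + 1 \<noteq> e"
    proof (cases "(a, b, col) = (a', b', col')")
      case True then show ?thesis using ja arcs_bounds[OF ia] by auto
    next
      case False then show ?thesis using arcs_apart(1,2)[OF ia ja(1) False] ja(2) unfolding apart_def by auto
    qed
    then show ?thesis using Endpoint \<open>i = Interior a b col\<close> by (simp add: pivot_def constraint_set_def)
  qed (use j Total_notin_arc_constraints in simp)
next
  case (Endpoint e col)
  then obtain a b where ia: "(a, b, col) \<in> arcs" "e = a \<or> e = b"
    using i Endpoint_in_arc_constraints by blast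
  show ?thesis
  proof (cases j)
    case (Interior a' b' col')
    then have "a' \<le> 2 * n" using j Interior_in_arc_constraints arcs_bounds by fastforce
    then show ?thesis using assms(4) Interior Endpoint by (simp add: rank_def)
  next
    case (Endpoint e' col')
    then obtain a' b' where ja: "(a', b', col') \<in> arcs" "e' = a' \<or> e' = b'"
      using j Endpoint_in_arc_constraints by blast
    have "e \<noteq> e'"
    proof
      assume "e = e'"
      moreover have "col \<noteq> col' \<or> e \<noteq> e'" using assms(3) Endpoint \<open>i = Endpoint e col\<close> by auto
      ultimately have "(a, b, col) \<noteq> (a', b', col')" by auto
      then show False
        using arcs_apart[OF ia(1) ja(1)] ia(2) ja(2) \<open>e = e'\<close> apart_imp_neq by metis
    qed
    then show ?thesis using Endpoint \<open>i = Endpoint e col\<close> by (simp add: pivot_def constraint_set_def)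
  qed (use j Total_notin_arc_constraints in simp)
qed (use i Total_notin_arc_constraints in simp)

lemma Total_pivot:
  assumes T: "T \<subseteq> points" "p \<in> T" "r \<le> 2 * n"
    and before: "\<And>a b col. (a, b, col) \<in> arcs \<Longrightarrow> a \<le> r \<Longrightarrow> a + 1 \<notin> T"
    and after: "\<And>a b col. (a, b, col) \<in> arcs \<Longrightarrow> r \<le> a \<Longrightarrow> p \<notin> {a<..<b}"
    and not_endpoint: "\<And>a b col. (a, b, col) \<in> arcs \<Longrightarrow> p \<noteq> a \<and> p \<noteq> b"
    and j: "j \<in> arc_constraints"
  shows "rank r j \<le> r \<Longrightarrow> pivot p j \<notin> T"
    and "r \<le> rank r j \<Longrightarrow> p \<notin> constraint_set T j"
proof -
  show "pivot p j \<notin> T" if "rank r j \<le> r"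
  proof (cases j)
    case (Interior a b col)
    then show ?thesis
      using that j before[of a b col] Interior_in_arc_constraints[of a b col] by (simp add: rank_def pivot_def)
  next
    case (Endpoint e col)
    then show ?thesis using that T(3) by (simp add: rank_def)
  qed (use j Total_notin_arc_constraints in simp)
  show "p \<notin> constraint_set T j" if "r \<le> rank r j"
  proof (cases j)
    case (Interior a b col)
    then show ?thesis
      using that j after[of a b col] Interior_in_arc_constraints[of a b col] by (simp add: rank_def constraint_set_def)
  next
    case (Endpoint e col)
    then obtain a b where "(a, b, col) \<in> arcs" "e = a \<or> e = b"
      using j Endpoint_in_arc_constraints by blast
    then show ?thesis using Endpoint not_endpoint by (auto simp: constraint_set_def)
  qed (use j Total_notin_arc_constraints in simp)
qed

lemma parity_sets_arc_ok:
  assumes R: "R \<in> parity_sets points I (constraint_set T) (constraint_parity c)"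
    and sub: "arc_constraints \<subseteq> I" and arc: "(a, b, col) \<in> arcs"
  shows "arc_ok R (a, b, col)"
proof -
  have C: "\<forall>i\<in>I. even (card (R \<inter> constraint_set T i)) = constraint_parity c i"
    using R unfolding parity_sets_def by auto
  have "Interior a b col \<in> I" "Endpoint a col \<in> I" "Endpoint b col \<in> I"
    using sub arc unfolding arc_constraints_def by force+
  then have inside: "even (card (R \<inter> {a<..<b})) = (col \<or> even (b - a - 1))"
    and ends: "a \<in> R \<longleftrightarrow> col" "b \<in> R \<longleftrightarrow> col"
    using C
    by (auto simp: constraint_set_def constraint_parity_def Int_insert_right split: if_splits)
  have ab: "1 \<le> a" "a < b" "b \<le> 2 * n" using arcs_bounds[OF arc] by auto
  have "b - a - 1 = card (R \<inter> {a<..<b}) + card ({a<..<b} - R)"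
    using card_Int_Diff[of "{a<..<b}" R] by (simp add: Int_commute)
  moreover have "between a b R = R \<inter> {a<..<b}" "between a b (points - R) = {a<..<b} - R"
    using ab unfolding points_def between_def by auto
  moreover have "a \<in> points" "b \<in> points" using ab unfolding points_def by auto
  ultimately show ?thesis
    using inside ends unfolding arc_ok_def colour_class_def by (cases col) auto
qed

text \<open>The solutions of such a system are admissible, and there are \<open>2\<^sup>2\<^sup>n / 2\<^sup>|\<^sup>I\<^sup>|\<close> of them.\<close>
lemma card_admissible_ge_from:
  assumes I: "arc_constraints \<subseteq> I" "I \<subseteq> insert Total arc_constraints"
    and pivots: "\<forall>i\<in>I. constraint_set T i \<subseteq> points \<and> pivot p i \<in> constraint_set T i"
      "\<forall>i\<in>I. \<forall>j\<in>I. i \<noteq> j \<and> rank r i \<le> rank r j \<longrightarrow> pivot p i \<notin> constraint_set T j"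
    and even: "\<And>R. R \<in> parity_sets points I (constraint_set T) (constraint_parity c) \<Longrightarrow> even (card R)"
  shows "real (card admissible) * 2 ^ (3 * (nred + nblue) + 1) \<ge> 2 ^ (2 * n)"
proof -
  let ?P = "parity_sets points I (constraint_set T) (constraint_parity c)"
  have finI: "finite I" using I finite_arc_constraints by (auto intro: finite_subset)
  have "card ?P * 2 ^ card I = 2 ^ card points"
    using card_parity_sets[OF _ finI pivots] by (simp add: points_def)
  moreover have "card I \<le> 3 * (nred + nblue) + 1"
  proof -
    have "card I \<le> card (insert Total arc_constraints)"
      using I(2) finite_arc_constraints by (intro card_mono) auto
    also have "\<dots> \<le> card arc_constraints + 1"
      using finite_arc_constraints by (simp add: card_insert_if)
    finally show ?thesis using card_arc_constraints by simp
  qed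
  moreover have "?P \<subseteq> admissible"
    using even parity_sets_arc_ok[OF _ I(1)] unfolding admissible_def parity_sets_def by auto
  then have "card ?P \<le> card admissible"
    by (rule card_mono[rotated]) (auto simp: admissible_def points_def intro: finite_subset)
  ultimately have "(2::nat) ^ (2 * n) \<le> card admissible * 2 ^ (3 * (nred + nblue) + 1)"
    by (metis mult_le_mono power_increasing_iff one_less_numeral_iff semiring_norm(76)
        card_atLeastAtMost diff_Suc_1 points_def)
  then have "real ((2::nat) ^ (2 * n)) \<le> real (card admissible * 2 ^ (3 * (nred + nblue) + 1))"
    by (rule of_nat_mono)
  then show ?thesis by simp
qed

lemma pivots_with_Total:
  assumes T: "T \<subseteq> points" "p \<in> T" "r \<le> 2 * n"
    and before: "\<And>a b col. (a, b, col) \<in> arcs \<Longrightarrow> a \<le> r \<Longrightarrow> a + 1 \<notin> T"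
    and after: "\<And>a b col. (a, b, col) \<in> arcs \<Longrightarrow> r \<le> a \<Longrightarrow> p \<notin> {a<..<b}"
    and not_endpoint: "\<And>a b col. (a, b, col) \<in> arcs \<Longrightarrow> p \<noteq> a \<and> p \<noteq> b"
  shows "\<forall>i\<in>insert Total arc_constraints. constraint_set T i \<subseteq> points \<and> pivot p i \<in> constraint_set T i"
    and "\<forall>i\<in>insert Total arc_constraints. \<forall>j\<in>insert Total arc_constraints.
           i \<noteq> j \<and> rank r i \<le> rank r j \<longrightarrow> pivot p i \<notin> constraint_set T j"
proof -
  have [simp]: "constraint_set T Total = T" "pivot p Total = p" "rank r Total = r"
    by (simp_all add: constraint_set_def pivot_def rank_def)
  show "\<forall>i\<in>insert Total arc_constraints. constraint_set T i \<subseteq> points \<and> pivot p i \<in> constraint_set T i"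
    using T arc_constraints_pivot by auto
  show "\<forall>i\<in>insert Total arc_constraints. \<forall>j\<in>insert Total arc_constraints.
           i \<noteq> j \<and> rank r i \<le> rank r j \<longrightarrow> pivot p i \<notin> constraint_set T j"
    using Total_pivot[OF T before after not_endpoint] arc_constraints_pivot_later by auto
qed

lemma card_admissible_ge_without_Total:
  assumes "\<And>R. R \<in> parity_sets points arc_constraints (constraint_set {}) (constraint_parity True)
    \<Longrightarrow> even (card R)"
  shows "real (card admissible) * 2 ^ (3 * (nred + nblue) + 1) \<ge> 2 ^ (2 * n)"
  using assms arc_constraints_pivot arc_constraints_pivot_later
  by (intro card_admissible_ge_from[of arc_constraints "{}" 0 0 True]) blast+

lemma card_admissible_ge_with_Total:
  assumes "T \<subseteq> points" "p \<in> T" "r \<le> 2 * n"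
    and "\<And>a b col. (a, b, col) \<in> arcs \<Longrightarrow> a \<le> r \<Longrightarrow> a + 1 \<notin> T"
    and "\<And>a b col. (a, b, col) \<in> arcs \<Longrightarrow> r \<le> a \<Longrightarrow> p \<notin> {a<..<b}"
    and "\<And>a b col. (a, b, col) \<in> arcs \<Longrightarrow> p \<noteq> a \<and> p \<noteq> b"
    and "\<And>R. R \<in> parity_sets points (insert Total arc_constraints) (constraint_set T) (constraint_parity c)
      \<Longrightarrow> even (card R)"
  shows "real (card admissible) * 2 ^ (3 * (nred + nblue) + 1) \<ge> 2 ^ (2 * n)"
  by (rule card_admissible_ge_from[OF _ _ pivots_with_Total[OF assms(1-6)] assms(7)]) auto

text \<open>If no arc starts at \<open>1\<close>, the point \<open>1\<close> lies in no constraint set and pivots the total parity.\<close>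
lemma card_admissible_ge_if_1_free:
  assumes "n > 0" "\<And>b col. (1, b, col) \<notin> arcs"
  shows "real (card admissible) * 2 ^ (3 * (nred + nblue) + 1) \<ge> 2 ^ (2 * n)"
proof (rule card_admissible_ge_with_Total[of points 1 0 True])
  show "1 \<in> points" using assms(1) by (simp add: points_def)
  show "1 \<noteq> a \<and> 1 \<noteq> b" if "(a, b, col) \<in> arcs" for a b col
    using assms(2) arcs_bounds[OF that] that by auto
  show "even (card R)"
    if R: "R \<in> parity_sets points (insert Total arc_constraints) (constraint_set points) (constraint_parity True)" for R
    using parity_setsD(2)[OF R insertI1] parity_setsD(1)[OF R]
    by (simp add: constraint_set_def constraint_parity_def Int_absorb2)
qed (use arcs_bounds in fastforce)+

text \<open>If an arc \<open>(1, b0)\<close> ends before \<open>2 * n\<close>, the total parity is replaced by the parity outside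
  that arc, pivoted at \<open>b0 + 1\<close>.\<close>
lemma card_admissible_ge_if_short_arc_at_1:
  assumes arc: "(1, b0, col0) \<in> arcs" and short: "b0 < 2 * n"
  shows "real (card admissible) * 2 ^ (3 * (nred + nblue) + 1) \<ge> 2 ^ (2 * n)"
proof -
  let ?T = "points - {1<..<b0}" and ?c = "col0 \<or> even (b0 - 1 - 1)"
  have b0: "3 \<le> b0" using arcs_bounds[OF arc] by simp
  have other: "(a, b, col) = (1, b0, col0) \<or> apart a b0 \<and> apart b b0" if "(a, b, col) \<in> arcs" for a b col
    using arcs_apart(2,4)[OF that arc] by blast
  show ?thesis
  proof (rule card_admissible_ge_with_Total[of ?T "b0 + 1" b0 ?c])
    show "b0 + 1 \<in> ?T" "b0 \<le> 2 * n" using short by (auto simp: points_def)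
    show "a + 1 \<notin> ?T" if "(a, b, col) \<in> arcs" "a \<le> b0" for a b col
      using other[OF that(1)] that(2) arcs_bounds[OF that(1)] b0 unfolding apart_def by auto
    show "b0 + 1 \<notin> {a<..<b}" if "(a, b, col) \<in> arcs" "b0 \<le> a" for a b col
      using other[OF that(1)] that(2) b0 unfolding apart_def by auto
    show "b0 + 1 \<noteq> a \<and> b0 + 1 \<noteq> b" if "(a, b, col) \<in> arcs" for a b col
      using other[OF that] b0 unfolding apart_def by auto
    show "even (card R)"
      if R: "R \<in> parity_sets points (insert Total arc_constraints) (constraint_set ?T) (constraint_parity ?c)" for R
    proof -
      have "Interior 1 b0 col0 \<in> arc_constraints" using arc unfolding arc_constraints_def by force
      from parity_setsD(2)[OF R insertI1] parity_setsD(2)[OF R insertI2[OF this]]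
      have "even (card (R \<inter> ?T)) = ?c" "even (card (R \<inter> {1<..<b0})) = ?c"
        by (simp_all add: constraint_set_def constraint_parity_def)
      moreover have "R - {1<..<b0} = R \<inter> ?T" using parity_setsD(1)[OF R] by auto
      then have "card R = card (R \<inter> {1<..<b0}) + card (R \<inter> ?T)"
        using card_Int_Diff[OF finite_subset[OF parity_setsD(1)[OF R]], of "{1<..<b0}"]
        by (simp add: points_def)
      ultimately show ?thesis by auto
    qed
  qed auto
qed

text \<open>An arc \<open>(1, 2 * n)\<close> already forces \<open>R\<close> to have even size.\<close>
lemma card_admissible_ge_if_long_arc:
  assumes arc: "(1, 2 * n, col0) \<in> arcs"
  shows "real (card admissible) * 2 ^ (3 * (nred + nblue) + 1) \<ge> 2 ^ (2 * n)"
proof (rule card_admissible_ge_without_Total)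
  fix R assume R: "R \<in> parity_sets points arc_constraints (constraint_set {}) (constraint_parity True)"
  have "Interior 1 (2 * n) col0 \<in> arc_constraints" "Endpoint 1 col0 \<in> arc_constraints"
    "Endpoint (2 * n) col0 \<in> arc_constraints"
    using arc unfolding arc_constraints_def by force+
  from parity_setsD(2)[OF R this(1)] parity_setsD(2)[OF R this(2)] parity_setsD(2)[OF R this(3)]
  have inside: "even (card (R \<inter> {1<..<2 * n}))"
    and "even (card (R \<inter> {1})) = (\<not> col0)" "even (card (R \<inter> {2 * n})) = (\<not> col0)"
    by (simp_all add: constraint_set_def constraint_parity_def)
  then have "1 \<in> R \<longleftrightarrow> col0" "2 * n \<in> R \<longleftrightarrow> col0"
    by (simp_all add: Int_insert_right split: if_splits)
  then have ends: "even (card (R \<inter> {1, 2 * n}))"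
    using arcs_bounds[OF arc] by (cases col0) (auto simp: Int_insert_right)
  have "R - {1<..<2 * n} = R \<inter> {1, 2 * n}"
    using parity_setsD(1)[OF R] unfolding points_def by auto
  then have "card R = card (R \<inter> {1<..<2 * n}) + card (R \<inter> {1, 2 * n})"
    using card_Int_Diff[OF finite_subset[OF parity_setsD(1)[OF R]], of "{1<..<2 * n}"]
    by (simp add: points_def)
  then show "even (card R)" using inside ends by simp
qed

lemma card_admissible_ge: "real (card admissible) * 2 ^ (3 * (nred + nblue) + 1) \<ge> 2 ^ (2 * n)"
proof -
  consider "n = 0" | "n > 0" "\<And>b col. (1, b, col) \<notin> arcs"
    | b0 col0 where "(1, b0, col0) \<in> arcs" "b0 < 2 * n" | col0 where "(1, 2 * n, col0) \<in> arcs"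
    using arcs_bounds by (metis le_neq_implies_less not_gr0)
  then show ?thesis
  proof cases
    case 1
    then have "points = {}" unfolding points_def by simp
    then show ?thesis by (intro card_admissible_ge_without_Total) (auto dest: parity_setsD(1))
  next
    case 2
    then show ?thesis by (rule card_admissible_ge_if_1_free)
  next
    case 3
    then show ?thesis by (rule card_admissible_ge_if_short_arc_at_1)
  next
    case 4
    then show ?thesis by (rule card_admissible_ge_if_long_arc)
  qed
qed

end

section \<open>The probability bound\<close>

lemma prob_bind_pmf: "measure_pmf.prob (bind_pmf M N) X = (\<integral>x. measure_pmf.prob (N x) X \<partial>M)"
proof -
  have "ennreal (measure_pmf.prob (bind_pmf M N) X) = emeasure (bind_pmf M N) X"
    by (simp add: measure_pmf.emeasure_eq_measure)
  also have "\<dots> = (\<integral>\<^sup>+x. emeasure (N x) X \<partial>M)"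
    by simp
  also have "\<dots> = (\<integral>\<^sup>+x. ennreal (measure_pmf.prob (N x) X) \<partial>M)"
    by (simp add: measure_pmf.emeasure_eq_measure)
  also have "\<dots> = ennreal (\<integral>x. measure_pmf.prob (N x) X \<partial>M)"
    by (rule nn_integral_eq_integral) (auto intro: measure_pmf.integrable_const_bound[where B=1])
  finally show ?thesis by (simp add: integral_nonneg)
qed

lemma sum_indicator_eq_card: "finite A \<Longrightarrow> (\<Sum>x\<in>A. indicator B x :: real) = real (card (A \<inter> B))"
  by (simp add: indicator_def of_bool_def sum.If_cases Int_def)

lemma red_sets_finite_nonempty: "finite (red_sets n)" "red_sets n \<noteq> {}"
proof -
  show "finite (red_sets n)" unfolding red_sets_def by (rule finite_subset[of _ "Pow {1..2*n}"]) auto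
  have "{} \<in> red_sets n" by (simp add: red_sets_def)
  then show "red_sets n \<noteq> {}" by blast
qed

lemma red_set_matchable:
  assumes "R \<in> red_sets n"
  shows "card (nc_matchings R) > 0" "card (nc_matchings ({1..2*n} - R)) > 0"
proof -
  have R: "R \<subseteq> {1..2*n}" "even (card R)" using assms by (simp_all add: red_sets_def)
  then have "finite R" using finite_subset by blast
  then have "even (card ({1..2*n} - R))" using R by (simp add: card_Diff_subset)
  then show "card (nc_matchings R) > 0" "card (nc_matchings ({1..2*n} - R)) > 0"
    using nc_matchings_nonempty \<open>finite R\<close> R(2) by auto
qed

lemma prob_CP:
  "measure_pmf.prob (CP n) E = (\<Sum>R\<in>red_sets n.
     real (card {M \<in> nc_matchings R \<times> nc_matchings ({1..2*n} - R). (R, fst M, snd M) \<in> E})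
       / (card (nc_matchings R) * card (nc_matchings ({1..2*n} - R)))) / card (red_sets n)"
proof -
  have inner: "measure_pmf.prob (pmf_of_set (nc_matchings R) \<bind>
        (\<lambda>M1. pmf_of_set (nc_matchings ({1..2*n} - R)) \<bind> (\<lambda>M2. return_pmf (R, M1, M2)))) E
     = real (card {M \<in> nc_matchings R \<times> nc_matchings ({1..2*n} - R). (R, fst M, snd M) \<in> E})
       / (card (nc_matchings R) * card (nc_matchings ({1..2*n} - R)))" if R: "R \<in> red_sets n" for R
  proof -
    let ?X = "nc_matchings R" and ?Y = "nc_matchings ({1..2*n} - R)"
    have XY: "?X \<noteq> {}" "finite ?X" "?Y \<noteq> {}" "finite ?Y"
      using red_set_matchable[OF R] by (auto simp: card_gt_0_iff)
    have "measure_pmf.prob (pmf_of_set ?X \<bind> (\<lambda>M1. pmf_of_set ?Y \<bind> (\<lambda>M2. return_pmf (R, M1, M2)))) E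
        = (\<Sum>M1\<in>?X. (\<Sum>M2\<in>?Y. indicator E (R, M1, M2)) / card ?Y) / card ?X"
      by (simp only: prob_bind_pmf measure_return_pmf integral_pmf_of_set[OF XY(3,4)]
          integral_pmf_of_set[OF XY(1,2)])
    also have "\<dots> = (\<Sum>M\<in>?X \<times> ?Y. indicator E (R, fst M, snd M)) / (card ?X * card ?Y)"
      by (simp add: sum.cartesian_product sum_divide_distrib[symmetric])
    also have "(\<Sum>M\<in>?X \<times> ?Y. indicator E (R, fst M, snd M) :: real)
        = (\<Sum>M\<in>?X \<times> ?Y. indicator {M. (R, fst M, snd M) \<in> E} M)"
      by (simp add: indicator_def)
    also have "\<dots> = card (?X \<times> ?Y \<inter> {M. (R, fst M, snd M) \<in> E})"
      using XY by (simp add: sum_indicator_eq_card)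
    also have "?X \<times> ?Y \<inter> {M. (R, fst M, snd M) \<in> E} = {M \<in> ?X \<times> ?Y. (R, fst M, snd M) \<in> E}"
      by blast
    finally show ?thesis .
  qed
  have "measure_pmf.prob (CP n) E = (\<Sum>R\<in>red_sets n. measure_pmf.prob (pmf_of_set (nc_matchings R) \<bind>
        (\<lambda>M1. pmf_of_set (nc_matchings ({1..2*n} - R)) \<bind> (\<lambda>M2. return_pmf (R, M1, M2)))) E) / card (red_sets n)"
    unfolding CP_def
    by (simp only: prob_bind_pmf[of "pmf_of_set (red_sets n)"]
        integral_pmf_of_set[OF red_sets_finite_nonempty(2,1)])
  also have "(\<Sum>R\<in>red_sets n. measure_pmf.prob (pmf_of_set (nc_matchings R) \<bind>
        (\<lambda>M1. pmf_of_set (nc_matchings ({1..2*n} - R)) \<bind> (\<lambda>M2. return_pmf (R, M1, M2)))) E)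
      = (\<Sum>R\<in>red_sets n. real (card {M \<in> nc_matchings R \<times> nc_matchings ({1..2*n} - R). (R, fst M, snd M) \<in> E})
       / (card (nc_matchings R) * card (nc_matchings ({1..2*n} - R))))"
    by (rule sum.cong[OF refl inner])
  finally show ?thesis .
qed

context good_quadruple
begin

definition arcs_of_colour :: "bool \<Rightarrow> (nat \<times> nat) set" where
  "arcs_of_colour col = {(a, b). (a, b, col) \<in> arcs}"

lemma red_arcs: "arcs_of_colour True = (\<lambda>i. (xs!i, xs!i + ks!i)) ` {..<nred}"
  unfolding arcs_of_colour_def arcs_def arc_def by (auto split: if_splits simp: image_iff)

lemma blue_arcs: "arcs_of_colour False = (\<lambda>j. (ys!j, ys!j + ls!j)) ` {..<nblue}"
  unfolding arcs_of_colour_def arcs_def arc_def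
  by (force split: if_splits simp: image_iff intro: bexI[of _ "nred + _"])

lemma admissible_subset_red_sets: "admissible \<subseteq> red_sets n"
  unfolding admissible_def red_sets_def points_def by auto

lemma event_A_if_arcs:
  assumes R: "R \<in> admissible" and M1: "arcs_of_colour True \<subseteq> M1" and M2: "arcs_of_colour False \<subseteq> M2"
  shows "(R, M1, M2) \<in> event_A n xs ks ys ls"
proof -
  have "arc_ok R \<alpha>" if "\<alpha> \<in> arcs" for \<alpha> using R that unfolding admissible_def by auto
  then have "arc_ok R (xs!i, xs!i + ks!i, True)" "(xs!i, xs!i + ks!i) \<in> arcs_of_colour True" if "i < nred" for i
    using red_arc[OF that] by (auto simp: arcs_of_colour_def)
  moreover have "arc_ok R (ys!j, ys!j + ls!j, False)" "(ys!j, ys!j + ls!j) \<in> arcs_of_colour False"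
    if "j < nblue" for j
    using blue_arc[OF that] \<open>\<And>\<alpha>. \<alpha> \<in> arcs \<Longrightarrow> arc_ok R \<alpha>\<close> by (auto simp: arcs_of_colour_def)
  ultimately show ?thesis
    using M1 M2 unfolding event_A_def arc_ok_def colour_class_def between_def points_def by auto
qed

lemma compatible_arcs_of_colour:
  assumes R: "R \<in> admissible"
  shows "compatible_arcs (colour_class R col) (arcs_of_colour col)"
  unfolding compatible_arcs_def
proof (intro conjI)
  show "\<forall>(c, d)\<in>arcs_of_colour col. c < d \<and> c \<in> colour_class R col \<and> d \<in> colour_class R col
      \<and> even (card (between c d (colour_class R col)))"
    using R arcs_bounds unfolding admissible_def arcs_of_colour_def arc_ok_def by fastforce
  show "\<forall>p\<in>arcs_of_colour col. \<forall>q\<in>arcs_of_colour col. p \<noteq> q \<longrightarrow> {fst p, snd p} \<inter> {fst q, snd q} = {}"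
  proof (intro ballI impI)
    fix p q assume "p \<in> arcs_of_colour col" "q \<in> arcs_of_colour col" "p \<noteq> q"
    then have "(fst p, snd p, col) \<in> arcs" "(fst q, snd q, col) \<in> arcs" "(fst p, snd p, col) \<noteq> (fst q, snd q, col)"
      by (auto simp: arcs_of_colour_def prod_eq_iff)
    from arcs_apart[OF this] show "{fst p, snd p} \<inter> {fst q, snd q} = {}"
      using apart_imp_neq by auto
  qed
  show "\<forall>(c, d)\<in>arcs_of_colour col. \<forall>(e, f)\<in>arcs_of_colour col. \<not> (c < e \<and> e < d \<and> d < f)"
    using arcs_no_crossing unfolding arcs_of_colour_def by blast
qed

abbreviation weight :: "bool \<Rightarrow> real" where
  "weight col \<equiv> \<Prod>p\<in>arcs_of_colour col. arc_weight p"

lemma conditional_prob_ge: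
  assumes R: "R \<in> admissible"
  shows "real (card {M \<in> nc_matchings R \<times> nc_matchings (points - R). (R, fst M, snd M) \<in> event_A n xs ks ys ls})
      / (card (nc_matchings R) * card (nc_matchings (points - R))) \<ge> weight True * weight False"
proof -
  let ?X = "nc_matchings R" and ?Y = "nc_matchings (points - R)"
  have R': "R \<in> red_sets n" using R admissible_subset_red_sets by blast
  have fin: "finite R" "finite (points - R)" "finite (arcs_of_colour True)" "finite (arcs_of_colour False)"
    using R by (auto simp: admissible_def points_def red_arcs blue_arcs intro: finite_subset)
  have even: "even (card R)" "even (card (points - R))"
    using R by (auto simp: admissible_def points_def card_Diff_subset[OF fin(1)])
  have pos: "card ?X > 0" "card ?Y > 0"
    using red_set_matchable[OF R'] by (simp_all add: points_def)
  have "matchings_containing R (arcs_of_colour True) \<times> matchings_containing (points - R) (arcs_of_colour False)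
      \<subseteq> {M \<in> ?X \<times> ?Y. (R, fst M, snd M) \<in> event_A n xs ks ys ls}"
    using event_A_if_arcs[OF R] unfolding matchings_containing_def by auto
  then have "real (card (matchings_containing R (arcs_of_colour True)))
      * card (matchings_containing (points - R) (arcs_of_colour False))
      \<le> card {M \<in> ?X \<times> ?Y. (R, fst M, snd M) \<in> event_A n xs ks ys ls}"
    using finite_nc_matchings fin by (simp flip: of_nat_mult card_cartesian_product add: card_mono)
  moreover have "real (card ?X) * weight True \<le> card (matchings_containing R (arcs_of_colour True))"
    "real (card ?Y) * weight False \<le> card (matchings_containing (points - R) (arcs_of_colour False))"
    using card_matchings_containing_ge[OF fin(3) fin(1) even(1)] card_matchings_containing_ge[OF fin(4) fin(2) even(2)]
      compatible_arcs_of_colour[OF R, of True] compatible_arcs_of_colour[OF R, of False]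
    by (simp_all add: colour_class_def)
  ultimately have "(real (card ?X) * weight True) * (real (card ?Y) * weight False)
      \<le> card {M \<in> ?X \<times> ?Y. (R, fst M, snd M) \<in> event_A n xs ks ys ls}"
    by (smt (verit) mult_mono prod_nonneg arc_weight_nonneg of_nat_0_le_iff mult_nonneg_nonneg)
  then show ?thesis using pos by (simp add: field_simps)
qed

lemma prob_event_A_ge:
  "measure_pmf.prob (CP n) (event_A n xs ks ys ls) \<ge> weight True * weight False / 2 ^ (3 * (nred + nblue) + 1)"
proof -
  define W where "W = weight True * weight False"
  define g where "g R = real (card {M \<in> nc_matchings R \<times> nc_matchings ({1..2*n} - R).
      (R, fst M, snd M) \<in> event_A n xs ks ys ls}) / (card (nc_matchings R) * card (nc_matchings ({1..2*n} - R)))"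
    for R
  have W: "W \<ge> 0" unfolding W_def by (simp add: prod_nonneg arc_weight_nonneg)
  have card_red_sets: "0 < card (red_sets n)" "card (red_sets n) \<le> 2 ^ (2 * n)"
  proof -
    show "0 < card (red_sets n)" using red_sets_finite_nonempty by (simp add: card_gt_0_iff)
    have "card (red_sets n) \<le> card (Pow {1..2 * n})" by (rule card_mono) (auto simp: red_sets_def)
    then show "card (red_sets n) \<le> 2 ^ (2 * n)" by (simp add: card_Pow)
  qed
  have "real (card admissible) * W = (\<Sum>R\<in>admissible. W)" by simp
  also have "\<dots> \<le> (\<Sum>R\<in>admissible. g R)"
    using conditional_prob_ge by (intro sum_mono) (simp add: g_def W_def points_def)
  also have "\<dots> \<le> (\<Sum>R\<in>red_sets n. g R)"
    using admissible_subset_red_sets red_sets_finite_nonempty by (intro sum_mono2) (auto simp: g_def)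
  finally have sum_ge: "real (card admissible) * W \<le> (\<Sum>R\<in>red_sets n. g R)" .
  have "W / 2 ^ (3 * (nred + nblue) + 1) = (2 ^ (2 * n) / 2 ^ (3 * (nred + nblue) + 1)) * W / 2 ^ (2 * n)"
    by simp
  also have "\<dots> \<le> real (card admissible) * W / 2 ^ (2 * n)"
    using card_admissible_ge W by (intro divide_right_mono mult_right_mono) (auto simp: field_simps)
  also have "\<dots> \<le> real (card admissible) * W / card (red_sets n)"
    using card_red_sets W by (intro divide_left_mono) (auto simp flip: of_nat_le_iff)
  also have "\<dots> \<le> (\<Sum>R\<in>red_sets n. g R) / card (red_sets n)"
    using sum_ge card_red_sets by (intro divide_right_mono) auto
  also have "\<dots> = measure_pmf.prob (CP n) (event_A n xs ks ys ls)"
    by (simp add: prob_CP g_def)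
  finally show ?thesis unfolding W_def .
qed

lemma arc_weight_eq: "arc_weight (a, a + k) = (1/8) * real k powr (-3/2)"
proof -
  have "real k powr (-3/2) = inverse (real k powr (3/2))" using powr_minus[of "real k" "3/2"] by simp
  then show ?thesis unfolding arc_weight_def by (simp add: field_simps)
qed

lemma weight_True: "weight True = (1/8) ^ nred * (\<Prod>i<nred. real (ks!i) powr (-3/2))"
  unfolding red_arcs prod.reindex[OF red_arc_inj] comp_def arc_weight_eq
  by (simp only: prod.distrib prod_constant card_lessThan)

lemma weight_False: "weight False = (1/8) ^ nblue * (\<Prod>j<nblue. real (ls!j) powr (-3/2))"
  unfolding blue_arcs prod.reindex[OF blue_arc_inj] comp_def arc_weight_eq
  by (simp only: prod.distrib prod_constant card_lessThan)

end

theorem lemma7p1: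
  shows "\<forall>s t :: nat. \<exists>\<alpha> :: real. \<alpha> > 0 \<and>
    (\<forall>n xs ks ys ls. length xs = s \<longrightarrow> length ys = t \<longrightarrow> good n xs ks ys ls \<longrightarrow>
       measure_pmf.prob (CP n) (event_A n xs ks ys ls)
         \<ge> \<alpha> * (\<Prod>i<s. real (ks!i) powr (-3/2)) * (\<Prod>j<t. real (ls!j) powr (-3/2)))"
proof (intro allI)
  fix s t :: nat
  let ?\<alpha> = "(1/8) ^ s * (1/8) ^ t / 2 ^ (3 * (s + t) + 1) :: real"
  show "\<exists>\<alpha> :: real. \<alpha> > 0 \<and> (\<forall>n xs ks ys ls. length xs = s \<longrightarrow> length ys = t \<longrightarrow> good n xs ks ys ls \<longrightarrow>
       measure_pmf.prob (CP n) (event_A n xs ks ys ls)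
         \<ge> \<alpha> * (\<Prod>i<s. real (ks!i) powr (-3/2)) * (\<Prod>j<t. real (ls!j) powr (-3/2)))"
  proof (rule exI[of _ ?\<alpha>], intro conjI allI impI)
    show "?\<alpha> > 0" by simp
    fix n xs ks ys ls assume "length xs = s" "length ys = t" and "good n xs ks ys ls"
    then interpret good_quadruple n xs ks ys ls by unfold_locales
    show "measure_pmf.prob (CP n) (event_A n xs ks ys ls)
         \<ge> ?\<alpha> * (\<Prod>i<s. real (ks!i) powr (-3/2)) * (\<Prod>j<t. real (ls!j) powr (-3/2))"
      using prob_event_A_ge \<open>length xs = s\<close> \<open>length ys = t\<close> by (simp add: weight_True weight_False ac_simps)
  qed
qed

end
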